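(* There exist a bounded Jordan domain $\mathbb{Y}\subset\mathbb{C}$ and a homeomorphism $h\colon\overline{\mathbb{D}}\to\overline{\mathbb{Y}}$ (onto), where $\mathbb{D}$ is the open unit disk, such that $h\in\mathscr{W}^{1,1}(\mathbb{D},\mathbb{C})$ but its boundary restriction $\varphi=h|_{\partial\mathbb{D}}$ satisfies \[ \int_{\partial\mathbb{D}}\int_{\partial\mathbb{D}}\frac{d_{\mathbb{Y}}(\varphi(x),\varphi(y))}{|x-y|}\,dx\,dy=\infty . \]
   Context: The internal distance $d_{\mathbb{Y}}$ on $\overline{\mathbb{Y}}$ is $d_{\mathbb{Y}}(x,y)=\inf_\gamma|\gamma|$, the infimum of lengths of rectifiable curves $\gamma\subset\overline{\mathbb{Y}}$ connecting $x$ to $y$. Integrals over $\partial\mathbb{D}$ are with respect to arc length measure. *)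

theory Defs
  imports "HOL-Analysis.Analysis"
begin

definition curve_length :: "(real \<Rightarrow> complex) \<Rightarrow> ennreal" where
  "curve_length g =
     (SUP p \<in> {(n, t). t 0 = 0 \<and> t n = 1 \<and> (\<forall>i<n. t i \<le> t (Suc i))}.
        ennreal (\<Sum>i<fst p. dist (g (snd p (Suc i))) (g (snd p i))))"

definition rectifiable_path :: "(real \<Rightarrow> complex) \<Rightarrow> bool" where
  "rectifiable_path g \<longleftrightarrow> path g \<and> curve_length g < \<infinity>"

definition internal_dist :: "complex set \<Rightarrow> complex \<Rightarrow> complex \<Rightarrow> ennreal" where
  "internal_dist Y x y =
     (INF g \<in> {g. rectifiable_path g \<and> path_image g \<subseteq> closure Y \<and>
                  pathstart g = x \<and> pathfinish g = y}. curve_length g)"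

definition jordan_domain :: "complex set \<Rightarrow> bool" where
  "jordan_domain Y \<longleftrightarrow> bounded Y \<and>
     (\<exists>c. simple_path c \<and> pathfinish c = pathstart c \<and> Y = inside (path_image c))"

(* C^\<infinity> real-valued functions on C = R^2: differentiable everywhere, and both partial
   derivatives are again C^\<infinity> *)
coinductive smooth_fun :: "(complex \<Rightarrow> real) \<Rightarrow> bool" where
  "(\<forall>z. f differentiable (at z)) \<Longrightarrow>
   smooth_fun (\<lambda>z. frechet_derivative f (at z) 1) \<Longrightarrow>
   smooth_fun (\<lambda>z. frechet_derivative f (at z) \<i>) \<Longrightarrow> smooth_fun f"

definition test_function :: "complex set \<Rightarrow> (complex \<Rightarrow> real) \<Rightarrow> bool" where
  "test_function U \<psi> \<longleftrightarrow> smooth_fun \<psi> \<and>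
     compact (closure {z. \<psi> z \<noteq> 0}) \<and> closure {z. \<psi> z \<noteq> 0} \<subseteq> U"

(* f has weak partial derivative g in direction v (v = 1 for x, v = \<i> for y) on U *)
definition weak_partial :: "complex set \<Rightarrow> complex \<Rightarrow> (complex \<Rightarrow> complex) \<Rightarrow> (complex \<Rightarrow> complex) \<Rightarrow> bool" where
  "weak_partial U v f g \<longleftrightarrow>
     (\<forall>\<psi>. test_function U \<psi> \<longrightarrow>
        (LINT z:U|lborel. f z * of_real (frechet_derivative \<psi> (at z) v))
          = - (LINT z:U|lborel. g z * of_real (\<psi> z)))"

definition sobolev_W11 :: "complex set \<Rightarrow> (complex \<Rightarrow> complex) \<Rightarrow> bool" where
  "sobolev_W11 U f \<longleftrightarrow> set_integrable lborel U f \<and>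
     (\<exists>g1 g2. set_integrable lborel U g1 \<and> set_integrable lborel U g2 \<and>
        weak_partial U 1 f g1 \<and> weak_partial U \<i> f g2)"

end

(*
  The map h(z) = z (1 + V z), with V z = sum_n 2^-n (Re (z^(m_n)))^2 and
  m_n = 2^(4^n), stretches the closed disc radially and injectively, so it is a homeomorphism
  onto the closure of the Jordan domain bounded by the star-shaped curve r = R(theta),
  R(theta) = 1 + sum_n 2^-n cos^2 (m_n theta).
  Since the integral of m |z|^(2m) over the disc stays bounded as m grows, the n-th term of the
  series contributes only O(2^-n) to the L^1 norm of Dh, so h is in W^{1,1}.
  On the boundary the internal distance dominates |R(s) - R(t)|; testing the increments of R
  against cos (2 m_n t) shows that the n-th term alone forces the boundary energy to exceed
  a constant times 2^-n log m_n = 2^n log 2, hence the energy is infinite.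
*)
theory Submission
  imports Defs "HOL-Complex_Analysis.Complex_Analysis"
begin

section \<open>Internal distance and chords of the circle\<close>

lemma internal_dist_ge_dist: "ennreal (dist x y) \<le> internal_dist Y x y"
  unfolding internal_dist_def
proof (rule INF_greatest)
  fix g assume "g \<in> {g. rectifiable_path g \<and> path_image g \<subseteq> closure Y \<and> pathstart g = x \<and> pathfinish g = y}"
  then have ends: "g 0 = x" "g 1 = y" by (auto simp: pathstart_def pathfinish_def)
  let ?one_segment = "(1::nat, \<lambda>i::nat. if i = 0 then 0 else (1::real))"
  have "ennreal (\<Sum>i<fst ?one_segment. dist (g (snd ?one_segment (Suc i))) (g (snd ?one_segment i)))
      \<le> curve_length g"
    unfolding curve_length_def by (rule SUP_upper) auto
  then show "ennreal (dist x y) \<le> curve_length g" using ends by (simp add: dist_commute)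
qed

lemma ennreal_abs_norm_diff_div_le_internal_dist:
  "ennreal (\<bar>cmod a - cmod b\<bar> / d) \<le> internal_dist Y a b / ennreal d"
proof (cases "d > 0")
  case True
  have "ennreal \<bar>cmod a - cmod b\<bar> \<le> ennreal (dist a b)"
    unfolding dist_norm by (intro ennreal_leI norm_triangle_ineq3)
  also have "\<dots> \<le> internal_dist Y a b" by (rule internal_dist_ge_dist)
  finally show ?thesis
    using True by (simp add: divide_ennreal[symmetric] divide_right_mono_ennreal)
next
  case False
  then have "\<bar>cmod a - cmod b\<bar> / d \<le> 0" by (simp add: divide_nonneg_nonpos)
  then show ?thesis by (simp add: ennreal_neg)
qed

lemma norm_cis_add_minus_cis:
  assumes "0 < u" "u \<le> pi"
  shows "0 < cmod (cis (t + u) - cis t)" "cmod (cis (t + u) - cis t) \<le> u"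
proof -
  have "cis (t + u) - cis t = cis t * (cis u - 1)" by (simp add: cis_mult[symmetric] algebra_simps)
  then have "cmod (cis (t + u) - cis t) = cmod (cis u - 1)" by (simp add: norm_mult)
  also have "\<dots> = 2 * sin (u / 2)"
  proof -
    have "(cmod (cis u - 1))\<^sup>2 = 2 - 2 * cos (2 * (u / 2))"
      by (simp add: cmod_power2 power2_diff sin_squared_eq)
    also have "\<dots> = (2 * sin (u / 2))\<^sup>2" by (simp only: cos_double_sin) (simp add: power_mult_distrib)
    moreover have "sin (u / 2) \<ge> 0" using assms by (intro sin_ge_zero) auto
    ultimately show ?thesis
      by (metis power2_eq_iff_nonneg norm_ge_zero mult_nonneg_nonneg zero_le_numeral)
  qed
  finally have eq: "cmod (cis (t + u) - cis t) = 2 * sin (u / 2)" .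
  show "0 < cmod (cis (t + u) - cis t)" unfolding eq using assms by (intro mult_pos_pos sin_gt_zero) auto
  show "cmod (cis (t + u) - cis t) \<le> u" unfolding eq using sin_x_le_x[of "u / 2"] assms by simp
qed

lemma borel_measurable_cis [measurable]: "cis \<in> borel_measurable borel"
  by (intro borel_measurable_continuous_onI continuous_intros)

section \<open>Trigonometric integrals\<close>

lemma sin_2pi_int_add: "sin (2 * pi * of_int k + x) = sin x"
  by (simp add: sin_add)

lemma cos_mult_cos_integral_0_pi:
  fixes p q :: nat
  assumes "p \<ge> 1" "q \<ge> 1"
  shows "(\<integral>t. cos (2 * real p * t + c) * cos (2 * real q * t) * indicator {0..pi} t \<partial>lborel)
         = (if p = q then pi / 2 * cos c else 0)"
proof (cases "p = q")
  case True
  define F where "F t = t * cos c / 2 + sin (4 * real p * t + c) / (8 * real p)" for t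
  have "DERIV F t :> cos (2 * real p * t + c) * cos (2 * real q * t)" for t
  proof -
    have "DERIV F t :> cos c / 2 + cos (4 * real p * t + c) * (4 * real p) / (8 * real p)"
      unfolding F_def by (auto intro!: derivative_eq_intros)
    then show ?thesis using assms True by (simp add: cos_times_cos field_simps)
  qed
  then have "(\<integral>t. cos (2 * real p * t + c) * cos (2 * real q * t) * indicator {0..pi} t \<partial>lborel)
      = F pi - F 0"
    by (intro integral_FTC_Icc_real) (auto intro!: continuous_intros)
  also have "\<dots> = pi / 2 * cos c"
    using sin_2pi_int_add[of "2 * int p" c] by (simp add: F_def algebra_simps)
  finally show ?thesis using True by simp
next
  case False
  define d1 where "d1 = real p - real q"
  define d2 where "d2 = real p + real q"
  have d: "d1 \<noteq> 0" "d2 > 0" using False assms by (auto simp: d1_def d2_def)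
  define F where "F t = sin (2 * d1 * t + c) / (4 * d1) + sin (2 * d2 * t + c) / (4 * d2)" for t
  have "DERIV F t :> cos (2 * real p * t + c) * cos (2 * real q * t)" for t
  proof -
    have "DERIV F t :> cos (2 * d1 * t + c) * (2 * d1) / (4 * d1) + cos (2 * d2 * t + c) * (2 * d2) / (4 * d2)"
      unfolding F_def by (auto intro!: derivative_eq_intros)
    moreover have "cos (2 * real p * t + c) * cos (2 * real q * t) = (cos (2 * d1 * t + c) + cos (2 * d2 * t + c)) / 2"
      using cos_times_cos[of "2 * real p * t + c" "2 * real q * t"] by (simp add: d1_def d2_def algebra_simps)
    then have "cos (2 * d1 * t + c) * (2 * d1) / (4 * d1) + cos (2 * d2 * t + c) * (2 * d2) / (4 * d2)
        = cos (2 * real p * t + c) * cos (2 * real q * t)"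
      using d by (simp add: field_simps)
    ultimately show ?thesis by simp
  qed
  then have "(\<integral>t. cos (2 * real p * t + c) * cos (2 * real q * t) * indicator {0..pi} t \<partial>lborel)
      = F pi - F 0"
    by (intro integral_FTC_Icc_real) (auto intro!: continuous_intros)
  also have "\<dots> = 0"
    using sin_2pi_int_add[of "int p - int q" c] sin_2pi_int_add[of "int p + int q" c]
    by (simp add: F_def d1_def d2_def algebra_simps)
  finally show ?thesis using False by simp
qed

lemma cos_sq_increment_cos_integral:
  fixes p q :: nat
  assumes "p \<ge> 1" "q \<ge> 1"
  shows "(\<integral>t. ((cos (real p * (t + u)))\<^sup>2 - (cos (real p * t))\<^sup>2) * cos (2 * real q * t) * indicator {0..pi} t \<partial>lborel)
    = (if p = q then pi / 4 * (cos (2 * real p * u) - 1) else 0)"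
proof -
  define A where "A c t = cos (2 * real p * t + c) * cos (2 * real q * t) * indicator {0..pi} t" for c t
  have integrable_A: "integrable lborel (A c)" for c
    unfolding A_def by (rule borel_integrable_atLeastAtMost) (auto intro!: continuous_intros)
  have pointwise: "((cos (real p * (t + u)))\<^sup>2 - (cos (real p * t))\<^sup>2) * cos (2 * real q * t) * indicator {0..pi} t
      = (A (2 * real p * u) t - A 0 t) / 2" for t
  proof -
    have "(cos x)\<^sup>2 = (1 + cos (2 * x)) / 2" for x :: real by (simp add: cos_double_cos)
    then have sq1: "(cos (real p * (t + u)))\<^sup>2 = (1 + cos (2 * real p * t + 2 * real p * u)) / 2"
      and sq2: "(cos (real p * t))\<^sup>2 = (1 + cos (2 * real p * t + 0)) / 2"
      by (simp_all add: algebra_simps)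
    show ?thesis unfolding A_def sq1 sq2 by (simp add: field_simps)
  qed
  have "(\<integral>t. ((cos (real p * (t + u)))\<^sup>2 - (cos (real p * t))\<^sup>2) * cos (2 * real q * t) * indicator {0..pi} t \<partial>lborel)
      = (\<integral>t. (A (2 * real p * u) t - A 0 t) / 2 \<partial>lborel)"
    by (simp only: pointwise)
  also have "\<dots> = ((\<integral>t. A (2 * real p * u) t \<partial>lborel) - (\<integral>t. A 0 t \<partial>lborel)) / 2"
    by (simp add: Bochner_Integration.integral_diff[OF integrable_A integrable_A])
  also have "\<dots> = (if p = q then pi / 4 * (cos (2 * real p * u) - 1) else 0)"
    unfolding A_def cos_mult_cos_integral_0_pi[OF assms] by (simp add: algebra_simps)
  finally show ?thesis .
qed

lemma cos_sq_series_increment_cos_integral: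
  fixes a :: "nat \<Rightarrow> real" and m :: "nat \<Rightarrow> nat"
  assumes a: "summable a" "\<And>j. 0 \<le> a j" and m: "inj m" "\<And>j. m j \<ge> 1"
  shows "(\<integral>t. ((\<Sum>j. a j * (cos (real (m j) * (t + u)))\<^sup>2) - (\<Sum>j. a j * (cos (real (m j) * t))\<^sup>2))
      * cos (2 * real (m n) * t) * indicator {0..pi} t \<partial>lborel) = a n * pi / 4 * (cos (2 * real (m n) * u) - 1)"
proof -
  define f where "f j t = a j * ((cos (real (m j) * (t + u)))\<^sup>2 - (cos (real (m j) * t))\<^sup>2)
    * cos (2 * real (m n) * t) * indicator {0..pi} t" for j t
  have summable_cos_sq: "summable (\<lambda>j. a j * (cos (real (m j) * x))\<^sup>2)" for x
    by (rule summable_comparison_test[OF _ a(1)]) (use a(2) in \<open>auto intro!: mult_left_le simp: abs_mult abs_square_le_1\<close>)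
  have sums: "(\<lambda>j. f j t) sums (((\<Sum>j. a j * (cos (real (m j) * (t + u)))\<^sup>2) - (\<Sum>j. a j * (cos (real (m j) * t))\<^sup>2))
      * cos (2 * real (m n) * t) * indicator {0..pi} t)" for t
    unfolding f_def right_diff_distrib
    by (intro sums_mult2 sums_diff summable_sums summable_cos_sq)
  have integrable_f[measurable]: "integrable lborel (f j)" for j
    unfolding f_def by (rule borel_integrable_atLeastAtMost) (auto intro!: continuous_intros)
  have bound: "norm (f j t) \<le> a j * indicator {0..pi} t" for j t
  proof -
    have "(cos x)\<^sup>2 \<le> 1" "0 \<le> (cos x)\<^sup>2" for x :: real by (simp_all add: abs_square_le_1)
    then have "\<bar>(cos (real (m j) * (t + u)))\<^sup>2 - (cos (real (m j) * t))\<^sup>2\<bar> \<le> 1"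
      by (smt (verit))
    then have "\<bar>(cos (real (m j) * (t + u)))\<^sup>2 - (cos (real (m j) * t))\<^sup>2\<bar> * \<bar>cos (2 * real (m n) * t)\<bar> \<le> 1"
      by (simp add: mult_le_one)
    then have "a j * (\<bar>(cos (real (m j) * (t + u)))\<^sup>2 - (cos (real (m j) * t))\<^sup>2\<bar> * \<bar>cos (2 * real (m n) * t)\<bar>) \<le> a j"
      using a(2)[of j] by (simp add: mult_left_le)
    then show ?thesis using a(2)[of j] by (auto simp: f_def abs_mult mult.assoc split: split_indicator)
  qed
  have "(\<integral>t. norm (f j t) \<partial>lborel) \<le> a j * pi" for j
    using integral_mono[OF integrable_norm[OF integrable_f] _ bound, of j] by simp
  then have summable_integrals: "summable (\<lambda>j. \<integral>t. norm (f j t) \<partial>lborel)"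
    by (intro summable_comparison_test[OF _ summable_mult2[OF a(1), of pi]]) auto
  have "AE t in lborel. summable (\<lambda>j. norm (f j t))"
    using bound by (intro AE_I2 summable_comparison_test[OF _ summable_mult2[OF a(1)]]) auto
  from integral_suminf[OF integrable_f this summable_integrals]
  have "(\<integral>t. (\<Sum>j. f j t) \<partial>lborel) = (\<Sum>j. \<integral>t. f j t \<partial>lborel)" .
  also have "\<dots> = (\<Sum>j. if j = n then a n * pi / 4 * (cos (2 * real (m n) * u) - 1) else 0)"
    using cos_sq_increment_cos_integral[OF m(2) m(2)] m(1)
    by (auto simp: f_def mult.assoc inj_eq intro!: suminf_cong)
  also have "\<dots> = a n * pi / 4 * (cos (2 * real (m n) * u) - 1)"
    using sums_single[of n "\<lambda>_. a n * pi / 4 * (cos (2 * real (m n) * u) - 1)"] by (simp add: sums_iff)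
  finally show ?thesis using sums_unique[OF sums] by simp
qed

lemma abs_integral_mult_cos_le_nn_integral:
  fixes g :: "real \<Rightarrow> real"
  assumes cont: "\<And>t. isCont g t"
  shows "ennreal \<bar>\<integral>t. g t * cos (k * t) * indicator {a..b} t \<partial>lborel\<bar> \<le> (\<integral>\<^sup>+t\<in>{a..b}. ennreal \<bar>g t\<bar> \<partial>lborel)"
proof -
  have integrable_abs_g: "integrable lborel (\<lambda>t. \<bar>g t\<bar> * indicator {a..b} t)"
    by (rule borel_integrable_atLeastAtMost) (auto intro!: continuous_intros cont)
  have "\<bar>\<integral>t. g t * cos (k * t) * indicator {a..b} t \<partial>lborel\<bar> \<le> (\<integral>t. \<bar>g t * cos (k * t) * indicator {a..b} t\<bar> \<partial>lborel)"
    using integral_norm_bound[of lborel "\<lambda>t. g t * cos (k * t) * indicator {a..b} t"] by simp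
  also have "\<dots> \<le> (\<integral>t. \<bar>g t\<bar> * indicator {a..b} t \<partial>lborel)"
  proof (rule integral_mono[OF _ integrable_abs_g])
    show "integrable lborel (\<lambda>t. \<bar>g t * cos (k * t) * indicator {a..b} t\<bar>)"
      by (intro integrable_abs borel_integrable_atLeastAtMost) (auto intro!: continuous_intros cont)
    have "\<bar>g t\<bar> * \<bar>cos (k * t)\<bar> \<le> \<bar>g t\<bar>" for t by (intro mult_left_le) auto
    then show "\<bar>g t * cos (k * t) * indicator {a..b} t\<bar> \<le> \<bar>g t\<bar> * indicator {a..b} t" for t
      by (auto simp: abs_mult split: split_indicator)
  qed
  finally have "ennreal \<bar>\<integral>t. g t * cos (k * t) * indicator {a..b} t \<partial>lborel\<bar>
      \<le> ennreal (\<integral>t. \<bar>g t\<bar> * indicator {a..b} t \<partial>lborel)" by (rule ennreal_leI)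
  also have "\<dots> = (\<integral>\<^sup>+t. ennreal (\<bar>g t\<bar> * indicator {a..b} t) \<partial>lborel)"
    by (rule nn_integral_eq_integral[symmetric, OF integrable_abs_g]) auto
  also have "\<dots> = (\<integral>\<^sup>+t\<in>{a..b}. ennreal \<bar>g t\<bar> \<partial>lborel)"
    by (intro nn_integral_cong) (auto split: split_indicator)
  finally show ?thesis .
qed

lemma has_real_derivative_ln_minus_sinc:
  assumes "u > 0" "k > 0"
  shows "((\<lambda>u. ln u - sin (k * u) / (k * u) + 1 / (k * u)) has_real_derivative
    (1 - cos (k * u)) / u + (sin (k * u) - 1) / (k * u\<^sup>2)) (at u)"
proof -
  have "((\<lambda>u. ln u - sin (k * u) / (k * u) + 1 / (k * u)) has_real_derivative
      1 / u - (cos (k * u) * k * (k * u) - sin (k * u) * k) / (k * u)\<^sup>2 + (- k / (k * u)\<^sup>2)) (at u)"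
    using assms by (auto intro!: derivative_eq_intros simp: power2_eq_square)
  moreover have "1 / u - (cos (k * u) * k * (k * u) - sin (k * u) * k) / (k * u)\<^sup>2 + (- k / (k * u)\<^sup>2)
      = (1 - cos (k * u)) / u + (sin (k * u) - 1) / (k * u\<^sup>2)"
    using assms by (simp add: field_simps power2_eq_square)
  ultimately show ?thesis by simp
qed

lemma ln_le_integral_one_minus_cos_div:
  assumes m: "m \<ge> (1::nat)"
  shows "ln (real m) \<le> (\<integral>u. (1 - cos (2 * real m * u)) / u * indicator {1 / real m..pi} u \<partial>lborel)"
proof -
  have m0: "real m > 0" using m by simp
  have pos: "u > 0" if "1 / real m \<le> u" for u
    using that m0 by (meson divide_pos_pos order_less_le_trans zero_less_one)
  have "1 / real m \<le> 1" using m by simp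
  then have lower_le_pi: "1 / real m \<le> pi" using pi_gt3 by linarith
  define k where "k = 2 * real m"
  have k0: "k > 0" using m0 by (simp add: k_def)
  define F where "F u = ln u - sin (k * u) / (k * u) + 1 / (k * u)" for u
  define g where "g u = (1 - cos (k * u)) / u + (sin (k * u) - 1) / (k * u\<^sup>2)" for u
  have cont_g: "isCont g u" if "1 / real m \<le> u" for u
    unfolding g_def using pos[OF that] k0 by (auto intro!: continuous_intros)
  have cont_f: "isCont (\<lambda>u. (1 - cos (2 * real m * u)) / u) u" if "1 / real m \<le> u" for u
    using pos[OF that] by (auto intro!: continuous_intros)
  have "ln (real m) \<le> ln pi + ln (real m) + sin 2 / 2 - 1 / 2 + 1 / (2 * real m * pi)"
  proof -
    have "ln 2 \<le> ln pi" using pi_gt3 by (subst ln_le_cancel_iff) auto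
    moreover have "2 / 3 \<le> ln (2::real)" by (rule ln2_ge_two_thirds)
    moreover have "sin (2::real) \<ge> 0" using pi_gt3 by (intro sin_ge_zero) auto
    moreover have "1 / (2 * real m * pi) \<ge> 0" using m0 by simp
    ultimately show ?thesis by linarith
  qed
  also have "\<dots> = F pi - F (1 / real m)"
  proof -
    have "sin (k * pi) = 0" using sin_npi[of "2 * m"] by (simp add: k_def mult.commute mult.left_commute)
    moreover have "k * (1 / real m) = 2" using m0 by (simp add: k_def)
    moreover have "ln (1 / real m) = - ln (real m)" using m0 by (simp add: ln_div)
    ultimately show ?thesis unfolding F_def using m0 by (simp add: k_def)
  qed
  also have "\<dots> = (\<integral>u. g u * indicator {1 / real m..pi} u \<partial>lborel)"
    unfolding F_def[abs_def] g_def[abs_def] using pos k0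
    by (intro integral_FTC_Icc_real[OF lower_le_pi, symmetric] has_real_derivative_ln_minus_sinc cont_g[unfolded g_def]) auto
  also have "\<dots> \<le> (\<integral>u. (1 - cos (2 * real m * u)) / u * indicator {1 / real m..pi} u \<partial>lborel)"
  proof (rule integral_mono)
    show "integrable lborel (\<lambda>u. g u * indicator {1 / real m..pi} u)"
      by (rule borel_integrable_atLeastAtMost) (auto intro!: cont_g)
    show "integrable lborel (\<lambda>u. (1 - cos (2 * real m * u)) / u * indicator {1 / real m..pi} u)"
      by (rule borel_integrable_atLeastAtMost) (auto intro!: cont_f)
    have "(sin (k * u) - 1) / (k * u\<^sup>2) \<le> 0" for u
      using k0 by (intro divide_nonpos_nonneg) auto
    then show "g u * indicator {1 / real m..pi} u \<le> (1 - cos (2 * real m * u)) / u * indicator {1 / real m..pi} u" for u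
      unfolding g_def k_def by (auto split: split_indicator)
  qed
  finally show ?thesis .
qed

section \<open>Boundary energy of a radial graph\<close>

text \<open>Testing the increment \<open>R(t + u) - R(t)\<close> against \<open>cos (2 m t)\<close> bounds its \<open>L\<^sup>1\<close> norm below
  by \<open>c (1 - cos (2 m u))\<close>, and \<open>(1 - cos (2 m u))/u\<close> integrates to at least \<open>ln m\<close>.\<close>
lemma increment_energy_ge_ln:
  fixes R :: "real \<Rightarrow> real"
  assumes cont: "\<And>t. isCont R t" and c: "0 \<le> c" and m: "m \<ge> 1"
    and coeff: "\<And>u. (\<integral>t. (R (t + u) - R t) * cos (2 * real m * t) * indicator {0..pi} t \<partial>lborel)
                 = c * (cos (2 * real m * u) - 1)"
  shows "ennreal (c * ln (real m))
    \<le> (\<integral>\<^sup>+u\<in>{0..pi}. (\<integral>\<^sup>+t\<in>{0..pi}. ennreal (\<bar>R (t + u) - R t\<bar> / u) \<partial>lborel) \<partial>lborel)"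
proof -
  have pos: "u > 0" if "u \<in> {1 / real m..pi}" for u
    using that m by (auto intro: less_le_trans[of 0 "1 / real m"])
  have cont_integrand: "isCont (\<lambda>u. c * (1 - cos (2 * real m * u)) / u) u" if "1 / real m \<le> u" for u
    using pos[of u] that by (auto intro!: continuous_intros)
  have "ennreal (c * ln (real m))
      \<le> ennreal (c * (\<integral>u. (1 - cos (2 * real m * u)) / u * indicator {1 / real m..pi} u \<partial>lborel))"
    using ln_le_integral_one_minus_cos_div[OF m] c by (intro ennreal_leI mult_left_mono)
  also have "\<dots> = ennreal (\<integral>u. c * ((1 - cos (2 * real m * u)) / u * indicator {1 / real m..pi} u) \<partial>lborel)"
    by (simp only: integral_mult_right_zero)
  also have "\<dots> = ennreal (\<integral>u. c * (1 - cos (2 * real m * u)) / u * indicator {1 / real m..pi} u \<partial>lborel)"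
    by (rule arg_cong[where f=ennreal], rule Bochner_Integration.integral_cong) auto
  also have "\<dots> = (\<integral>\<^sup>+u. ennreal (c * (1 - cos (2 * real m * u)) / u * indicator {1 / real m..pi} u) \<partial>lborel)"
    using c pos
    by (intro nn_integral_eq_integral[symmetric] borel_integrable_atLeastAtMost cont_integrand AE_I2)
       (auto split: split_indicator intro!: divide_nonneg_pos mult_nonneg_nonneg)
  also have "\<dots> \<le> (\<integral>\<^sup>+u\<in>{0..pi}. (\<integral>\<^sup>+t\<in>{0..pi}. ennreal (\<bar>R (t + u) - R t\<bar> / u) \<partial>lborel) \<partial>lborel)"
  proof (rule nn_integral_mono)
    fix u
    show "ennreal (c * (1 - cos (2 * real m * u)) / u * indicator {1 / real m..pi} u)
        \<le> (\<integral>\<^sup>+t\<in>{0..pi}. ennreal (\<bar>R (t + u) - R t\<bar> / u) \<partial>lborel) * indicator {0..pi} u"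
    proof (cases "u \<in> {1 / real m..pi}")
      case True
      then have "u > 0" "u \<in> {0..pi}" using pos[OF True] by auto
      have "(\<integral>t. (R (t + u) - R t) / u * cos (2 * real m * t) * indicator {0..pi} t \<partial>lborel)
          = (\<integral>t. (R (t + u) - R t) * cos (2 * real m * t) * indicator {0..pi} t / u \<partial>lborel)"
        by (rule Bochner_Integration.integral_cong) auto
      also have "\<dots> = - (c * (1 - cos (2 * real m * u)) / u)"
        unfolding integral_divide_zero coeff by (simp add: minus_divide_left algebra_simps)
      finally have "c * (1 - cos (2 * real m * u)) / u
          = \<bar>\<integral>t. (R (t + u) - R t) / u * cos (2 * real m * t) * indicator {0..pi} t \<partial>lborel\<bar>"
        using c \<open>u > 0\<close> by simp
      also have "ennreal \<dots> \<le> (\<integral>\<^sup>+t\<in>{0..pi}. ennreal \<bar>(R (t + u) - R t) / u\<bar> \<partial>lborel)"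
        using \<open>u > 0\<close>
        by (intro abs_integral_mult_cos_le_nn_integral) (auto intro!: continuous_intros isCont_o2[OF _ cont] cont)
      also have "\<dots> = (\<integral>\<^sup>+t\<in>{0..pi}. ennreal (\<bar>R (t + u) - R t\<bar> / u) \<partial>lborel)"
        using \<open>u > 0\<close> by simp
      finally show ?thesis using True \<open>u \<in> {0..pi}\<close> by simp
    qed simp
  qed
  finally show ?thesis .
qed

lemma increment_integral_le_boundary_integral:
  fixes h :: "complex \<Rightarrow> complex" and R :: "real \<Rightarrow> real"
  assumes radius: "\<And>\<theta>. cmod (h (cis \<theta>)) = R \<theta>" and cont: "\<And>t. isCont R t" and t: "t \<in> {0..pi}"
  shows "(\<integral>\<^sup>+u\<in>{0..pi}. ennreal (\<bar>R (t + u) - R t\<bar> / u) \<partial>lborel)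
    \<le> (\<integral>\<^sup>+s\<in>{0..2*pi}. internal_dist Y (h (cis s)) (h (cis t)) / ennreal (cmod (cis s - cis t)) \<partial>lborel)"
proof -
  have [measurable]: "R \<in> borel_measurable borel"
    using cont by (intro borel_measurable_continuous_onI continuous_at_imp_continuous_on) auto
  define K where "K s = ennreal (\<bar>R s - R t\<bar> / cmod (cis s - cis t))" for s
  have [measurable]: "K \<in> borel_measurable borel"
    unfolding K_def by measurable
  have "(\<integral>\<^sup>+u\<in>{0..pi}. ennreal (\<bar>R (t + u) - R t\<bar> / u) \<partial>lborel) \<le> (\<integral>\<^sup>+u\<in>{0..pi}. K (t + u) \<partial>lborel)"
  proof (intro nn_integral_mono)
    fix u
    have "\<bar>R (t + u) - R t\<bar> / u \<le> \<bar>R (t + u) - R t\<bar> / cmod (cis (t + u) - cis t)" if "0 < u" "u \<le> pi"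
      using norm_cis_add_minus_cis[OF that, of t] that by (intro divide_left_mono) auto
    then show "ennreal (\<bar>R (t + u) - R t\<bar> / u) * indicator {0..pi} u \<le> K (t + u) * indicator {0..pi} u"
      by (cases "u = 0") (auto simp: K_def ennreal_leI split: split_indicator)
  qed
  also have "\<dots> = (\<integral>\<^sup>+s\<in>{t..t+pi}. K s \<partial>lborel)"
    using nn_integral_real_affine[of "\<lambda>s. K s * indicator {t..t+pi} s" 1 t]
    by (simp add: indicator_def add.commute)
  also have "\<dots> \<le> (\<integral>\<^sup>+s\<in>{0..2*pi}. internal_dist Y (h (cis s)) (h (cis t)) / ennreal (cmod (cis s - cis t)) \<partial>lborel)"
    using t ennreal_abs_norm_diff_div_le_internal_dist[of "h (cis _)" "h (cis t)"]
    by (intro nn_integral_mono) (auto simp: K_def radius split: split_indicator)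
  finally show ?thesis .
qed

lemma increment_energy_le_boundary_energy:
  fixes h :: "complex \<Rightarrow> complex" and R :: "real \<Rightarrow> real"
  assumes radius: "\<And>\<theta>. cmod (h (cis \<theta>)) = R \<theta>" and cont: "\<And>t. isCont R t"
  shows "(\<integral>\<^sup>+u\<in>{0..pi}. (\<integral>\<^sup>+t\<in>{0..pi}. ennreal (\<bar>R (t + u) - R t\<bar> / u) \<partial>lborel) \<partial>lborel)
    \<le> (\<integral>\<^sup>+t\<in>{0..2*pi}. (\<integral>\<^sup>+s\<in>{0..2*pi}.
          internal_dist Y (h (cis s)) (h (cis t)) / ennreal (cmod (cis s - cis t)) \<partial>lborel) \<partial>lborel)"
proof -
  have [measurable]: "R \<in> borel_measurable borel"
    using cont by (intro borel_measurable_continuous_onI continuous_at_imp_continuous_on) auto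
  define E where "E t u = ennreal (\<bar>R (t + u) - R t\<bar> / u)" for t u
  have [measurable]: "(\<lambda>(u, t). E t u) \<in> borel_measurable (lborel \<Otimes>\<^sub>M lborel)"
    unfolding E_def by measurable
  have [measurable]: "E t \<in> borel_measurable borel" for t
    unfolding E_def by measurable
  have "(\<integral>\<^sup>+u\<in>{0..pi}. (\<integral>\<^sup>+t\<in>{0..pi}. E t u \<partial>lborel) \<partial>lborel)
      = (\<integral>\<^sup>+u. (\<integral>\<^sup>+t. E t u * indicator {0..pi} t * indicator {0..pi} u \<partial>lborel) \<partial>lborel)"
    by (intro nn_integral_cong nn_integral_multc[symmetric]) measurable
  also have "\<dots> = (\<integral>\<^sup>+t. (\<integral>\<^sup>+u. E t u * indicator {0..pi} t * indicator {0..pi} u \<partial>lborel) \<partial>lborel)"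
    by (rule lborel_pair.Fubini'[symmetric]) measurable
  also have "\<dots> = (\<integral>\<^sup>+t\<in>{0..pi}. (\<integral>\<^sup>+u\<in>{0..pi}. E t u \<partial>lborel) \<partial>lborel)"
  proof (rule nn_integral_cong)
    fix t
    have "(\<integral>\<^sup>+u. E t u * indicator {0..pi} t * indicator {0..pi} u \<partial>lborel)
        = (\<integral>\<^sup>+u. E t u * indicator {0..pi} u * indicator {0..pi} t \<partial>lborel)"
      by (simp add: ac_simps)
    also have "\<dots> = (\<integral>\<^sup>+u\<in>{0..pi}. E t u \<partial>lborel) * indicator {0..pi} t"
      by (rule nn_integral_multc) measurable
    finally show "(\<integral>\<^sup>+u. E t u * indicator {0..pi} t * indicator {0..pi} u \<partial>lborel)
        = (\<integral>\<^sup>+u\<in>{0..pi}. E t u \<partial>lborel) * indicator {0..pi} t" .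
  qed
  also have "\<dots> \<le> (\<integral>\<^sup>+t\<in>{0..2*pi}. (\<integral>\<^sup>+s\<in>{0..2*pi}.
          internal_dist Y (h (cis s)) (h (cis t)) / ennreal (cmod (cis s - cis t)) \<partial>lborel) \<partial>lborel)"
    using increment_integral_le_boundary_integral[OF radius cont]
    by (intro nn_integral_mono) (auto simp: E_def split: split_indicator)
  finally show ?thesis by (simp add: E_def)
qed

section \<open>Injective images of the closed disc\<close>

lemma closure_image_unit_ball:
  fixes h :: "complex \<Rightarrow> complex"
  assumes "continuous_on (cball 0 1) h"
  shows "closure (h ` ball 0 1) = h ` cball 0 1"
proof
  have "compact (h ` cball 0 1)" by (rule compact_continuous_image[OF assms]) simp
  then show "closure (h ` ball 0 1) \<subseteq> h ` cball 0 1"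
    by (intro closure_minimal image_mono) (auto simp: compact_imp_closed)
  have "h ` closure (ball 0 1) \<subseteq> closure (h ` ball 0 1)"
    by (rule image_closure_subset) (use assms in \<open>auto intro: closure_subset[THEN subsetD]\<close>)
  then show "h ` cball 0 1 \<subseteq> closure (h ` ball 0 1)" by simp
qed

text \<open>The image \<open>Y\<close> of the open disc is open (invariance of domain) and disjoint from the
  Jordan curve \<open>J = h(\<partial>\<D>)\<close>; as \<open>-J = Y \<union> (- h(\<D>\<^sup>-))\<close> with both parts open and \<open>Y\<close> bounded,
  connectedness of the inside and outside of \<open>J\<close> forces \<open>Y\<close> to be the inside.\<close>
lemma jordan_domain_image_unit_ball:
  fixes h :: "complex \<Rightarrow> complex"
  assumes cont: "continuous_on (cball 0 1) h" and inj: "inj_on h (cball 0 1)"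
  shows "jordan_domain (h ` ball 0 1)"
proof -
  define Y where "Y = h ` ball 0 1"
  define c where "c = h \<circ> circlepath 0 1"
  have simple: "simple_path c" unfolding c_def
    by (rule simple_path_continuous_image)
       (auto simp: simple_path_circlepath intro: continuous_on_subset[OF cont] inj_on_subset[OF inj])
  have loop: "pathfinish c = pathstart c" by (simp add: c_def pathfinish_compose pathstart_compose)
  define J where "J = path_image c"
  have J: "J = h ` sphere 0 1" by (simp add: J_def c_def path_image_compose)
  define W where "W = - (h ` cball 0 1)"
  have compact_image: "compact (h ` cball 0 1)" by (rule compact_continuous_image[OF cont]) simp
  have "open W" unfolding W_def using compact_image by (simp add: compact_imp_closed open_Compl)
  have "open Y" unfolding Y_def
    by (rule invariance_of_domain) (auto intro: continuous_on_subset[OF cont] inj_on_subset[OF inj])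
  have "bounded Y" unfolding Y_def using compact_image
    by (meson ball_subset_cball bounded_subset compact_imp_bounded image_mono)
  have YW: "Y \<inter> W = {}" by (auto simp: Y_def W_def)
  have YJ: "Y \<inter> J = {}"
  proof -
    have "x \<noteq> y" if "x \<in> ball 0 1" "y \<in> sphere 0 1" for x y using that by auto
    then show ?thesis using inj unfolding Y_def J inj_on_def by fastforce
  qed
  have "cball (0::complex) 1 = ball 0 1 \<union> sphere 0 1" by auto
  then have "h ` cball 0 1 = Y \<union> J" unfolding Y_def J by (simp add: image_Un)
  then have compl_J: "- J = Y \<union> W" unfolding W_def using YJ by blast
  have in_Y_or_W: "S \<subseteq> Y \<or> S \<subseteq> W" if "connected S" "S \<subseteq> - J" for S
    using connectedD[OF that(1) \<open>open Y\<close> \<open>open W\<close>] YW that(2) compl_J by blast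
  note JIO = Jordan_inside_outside[OF simple loop, folded J_def]
  have "outside J \<subseteq> Y \<or> outside J \<subseteq> W"
    using JIO outside_no_overlap[of J] by (intro in_Y_or_W) blast+
  moreover have "\<not> outside J \<subseteq> Y" using JIO \<open>bounded Y\<close> bounded_subset by blast
  ultimately have "outside J \<subseteq> W" by blast
  moreover have "inside J \<union> outside J = - J" using JIO by blast
  ultimately have "Y \<subseteq> inside J" using compl_J YW by blast
  have "inside J \<subseteq> Y \<or> inside J \<subseteq> W"
    using JIO inside_no_overlap[of J] by (intro in_Y_or_W) blast+
  moreover have "Y \<noteq> {}" by (simp add: Y_def)
  ultimately have "inside J \<subseteq> Y" using \<open>Y \<subseteq> inside J\<close> YW by blast
  then have "Y = inside J" using \<open>Y \<subseteq> inside J\<close> by blast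
  then show ?thesis
    unfolding jordan_domain_def Y_def[symmetric] using \<open>bounded Y\<close> simple loop J_def by blast
qed

text \<open>If \<open>h z = h w\<close> then \<open>w\<close> is a positive multiple \<open>c z\<close>; radial monotonicity of \<open>V\<close> excludes
  \<open>c < 1\<close>, and by symmetry also \<open>c > 1\<close>.\<close>
lemma inj_on_radial_stretch:
  fixes V :: "complex \<Rightarrow> real"
  assumes nonneg: "\<And>z. cmod z \<le> 1 \<Longrightarrow> 0 \<le> V z"
    and radial_mono: "\<And>z c. cmod z \<le> 1 \<Longrightarrow> 0 \<le> c \<Longrightarrow> c \<le> 1 \<Longrightarrow> V (of_real c * z) \<le> V z"
  shows "inj_on (\<lambda>z. z * of_real (1 + V z)) (cball 0 1)"
proof -
  have shrink: "of_real c * z = z"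
    if z: "cmod z \<le> 1" and c: "0 \<le> c" "c \<le> 1" and eq: "z * of_real (1 + V z) = of_real c * z * of_real (1 + V (of_real c * z))"
    for z c
  proof (cases "z = 0")
    case False
    have "cmod (of_real c * z) \<le> 1" using z c by (simp add: norm_mult mult_le_one)
    then have "1 \<le> 1 + V (of_real c * z)" using nonneg by simp
    moreover have "1 + V z = c * (1 + V (of_real c * z))"
      using eq False by (simp flip: of_real_add of_real_mult)
    moreover have "V (of_real c * z) \<le> V z" using radial_mono z c by blast
    ultimately have "c = 1" using c by (smt (verit) mult_le_cancel_right1)
    then show ?thesis by simp
  qed simp
  show ?thesis
  proof (rule inj_onI)
    fix z w assume z: "z \<in> cball 0 1" and w: "w \<in> cball 0 1"
      and eq: "z * of_real (1 + V z) = w * of_real (1 + V w)"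
    define l where "l = 1 + V z"
    define u where "u = 1 + V w"
    have "l \<ge> 1" "u \<ge> 1" using nonneg z w by (auto simp: l_def u_def)
    have eq': "z * of_real l = w * of_real u" using eq by (simp add: l_def u_def)
    show "z = w"
    proof (cases "l \<le> u")
      case True
      have "w = of_real (l / u) * z" using eq' \<open>u \<ge> 1\<close> by (simp add: field_simps)
      then show ?thesis
        using shrink[of z "l / u"] eq z True \<open>l \<ge> 1\<close> by (simp add: divide_le_eq)
    next
      case False
      have "z = of_real (u / l) * w" using eq' \<open>l \<ge> 1\<close> by (simp add: field_simps)
      then show ?thesis
        using shrink[of w "u / l"] eq w False \<open>u \<ge> 1\<close> by (simp add: divide_le_eq)
    qed
  qed
qed

lemma compact_subset_ball_imp_subset_cball:
  fixes K :: "'a::metric_space set"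
  assumes "compact K" "K \<subseteq> ball a e"
  obtains r where "r < e" "K \<subseteq> cball a r"
proof (cases "K = {}")
  case True
  then show ?thesis using that[of "e - 1"] by auto
next
  case False
  obtain z0 where "z0 \<in> K" "\<And>z. z \<in> K \<Longrightarrow> dist a z \<le> dist a z0"
    using continuous_attains_sup[OF assms(1) False continuous_on_dist[OF continuous_on_const[where c=a] continuous_on_id]]
    by auto
  moreover have "dist a z0 < e" using \<open>z0 \<in> K\<close> assms(2) by auto
  ultimately show ?thesis using that[of "dist a z0"] by (auto simp: subset_iff)
qed

section \<open>Moments of the unit disc\<close>

lemma ball_in_borel [measurable]: "ball (c::'a::metric_space) r \<in> sets borel"
  by simp

lemma emeasure_ball_complex: "r \<ge> 0 \<Longrightarrow> emeasure lborel (ball (0::complex) r) = ennreal (pi * r\<^sup>2)"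
  using emeasure_ball[of r "0::complex"] by (simp add: unit_ball_vol_2)

lemma nn_integral_lborel_complex_scale:
  fixes f :: "complex \<Rightarrow> ennreal"
  assumes [measurable]: "f \<in> borel_measurable borel" and c: "c > 0"
  shows "(\<integral>\<^sup>+z. f z \<partial>lborel) = ennreal (c\<^sup>2) * (\<integral>\<^sup>+z. f (of_real c * z) \<partial>lborel)"
proof -
  have "lborel = density (distr lborel borel (\<lambda>x::complex. 0 + c *\<^sub>R x)) (\<lambda>_. ennreal (\<bar>c\<bar> ^ DIM(complex)))"
    using lborel_affine[of c "0::complex"] c by simp
  then have "(\<integral>\<^sup>+z. f z \<partial>lborel)
      = (\<integral>\<^sup>+z. f z \<partial>density (distr lborel borel (\<lambda>x::complex. 0 + c *\<^sub>R x)) (\<lambda>_. ennreal (\<bar>c\<bar> ^ DIM(complex))))"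
    by simp
  also have "\<dots> = (\<integral>\<^sup>+z. ennreal (\<bar>c\<bar> ^ DIM(complex)) * f z \<partial>distr lborel borel (\<lambda>x::complex. 0 + c *\<^sub>R x))"
    by (rule nn_integral_density) auto
  also have "\<dots> = (\<integral>\<^sup>+z. ennreal (\<bar>c\<bar> ^ DIM(complex)) * f (0 + c *\<^sub>R z) \<partial>lborel)"
    by (rule nn_integral_distr) auto
  also have "\<dots> = ennreal (c\<^sup>2) * (\<integral>\<^sup>+z. f (of_real c * z) \<partial>lborel)"
    using c by (subst nn_integral_cmult) (auto simp: scaleR_conv_of_real)
  finally show ?thesis .
qed

lemma nn_integral_norm_power_ball_scale:
  assumes r: "r > 0"
  shows "(\<integral>\<^sup>+z. ennreal (cmod z ^ k) * indicator (ball 0 r) z \<partial>lborel)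
    = ennreal (r ^ (k + 2)) * (\<integral>\<^sup>+z. ennreal (cmod z ^ k) * indicator (ball 0 1) z \<partial>lborel)"
proof -
  have "(\<integral>\<^sup>+z. ennreal (cmod z ^ k) * indicator (ball 0 r) z \<partial>lborel)
      = ennreal (r\<^sup>2) * (\<integral>\<^sup>+z. ennreal (cmod (of_real r * z) ^ k) * indicator (ball 0 r) (of_real r * z) \<partial>lborel)"
    by (rule nn_integral_lborel_complex_scale[OF _ r]) measurable
  also have "(\<lambda>z. ennreal (cmod (of_real r * z) ^ k) * indicator (ball 0 r) (of_real r * z))
      = (\<lambda>z. ennreal (r ^ k) * (ennreal (cmod z ^ k) * indicator (ball 0 1) z))"
  proof
    fix z :: complex
    have "(of_real r * z \<in> ball 0 r) = (z \<in> ball 0 1)" using r by (simp add: norm_mult)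
    then show "ennreal (cmod (of_real r * z) ^ k) * indicator (ball 0 r) (of_real r * z)
      = ennreal (r ^ k) * (ennreal (cmod z ^ k) * indicator (ball 0 1) z)"
      using r by (auto simp: norm_mult power_mult_distrib ennreal_mult split: split_indicator)
  qed
  also have "(\<integral>\<^sup>+z. ennreal (r ^ k) * (ennreal (cmod z ^ k) * indicator (ball 0 1) z) \<partial>lborel)
      = ennreal (r ^ k) * (\<integral>\<^sup>+z. ennreal (cmod z ^ k) * indicator (ball 0 1) z \<partial>lborel)"
    by (rule nn_integral_cmult) measurable
  also have "ennreal (r\<^sup>2) * (ennreal (r ^ k) * (\<integral>\<^sup>+z. ennreal (cmod z ^ k) * indicator (ball 0 1) z \<partial>lborel))
      = ennreal (r ^ (k + 2)) * (\<integral>\<^sup>+z. ennreal (cmod z ^ k) * indicator (ball 0 1) z \<partial>lborel)"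
    using r by (simp add: mult.assoc ennreal_mult power_add mult.commute power2_eq_square)
  finally show ?thesis .
qed

text \<open>Self-similarity: the integral \<open>J\<close> over the unit disc is at most its rescaling
  \<open>r\<^sup>k\<^sup>+\<^sup>2 J\<close> over the disc of radius \<open>r = 1 - 1/(k+2)\<close> plus the area of the annulus,
  and \<open>r\<^sup>k\<^sup>+\<^sup>2 \<le> 1/2\<close>.\<close>
lemma nn_integral_norm_power_unit_ball_le:
  "(\<integral>\<^sup>+z. ennreal (cmod z ^ k) * indicator (ball 0 1) z \<partial>lborel) \<le> ennreal (4 * pi / (real k + 2))"
proof -
  define J where "J r = (\<integral>\<^sup>+z. ennreal (cmod z ^ k) * indicator (ball (0::complex) r) z \<partial>lborel)" for r
  have power_le_1: "ennreal (cmod z ^ k) * indicator (ball 0 1) z \<le> indicator (ball 0 1) z" for z :: complex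
    by (cases "z \<in> ball 0 1") (auto intro: power_le_one)
  define N where "N = real k + 2"
  define r where "r = 1 - 1 / N"
  have N: "N \<ge> 2" and r: "0 < r" "r \<le> 1" by (auto simp: N_def r_def)
  have "J 1 \<le> (\<integral>\<^sup>+z. indicator (ball (0::complex) 1) z \<partial>lborel)"
    unfolding J_def by (intro nn_integral_mono power_le_1)
  also have "\<dots> = ennreal pi" by (simp add: emeasure_ball_complex)
  finally obtain j where j: "J 1 = ennreal j" "j \<ge> 0"
    by (cases "J 1" rule: ennreal_cases) (auto simp: top_unique)
  have "J 1 \<le> (\<integral>\<^sup>+z. ennreal (cmod z ^ k) * indicator (ball 0 r) z + indicator (ball 0 1 - ball 0 r) z \<partial>lborel)"
    unfolding J_def
  proof (rule nn_integral_mono)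
    fix z :: complex
    show "ennreal (cmod z ^ k) * indicator (ball 0 1) z
        \<le> ennreal (cmod z ^ k) * indicator (ball 0 r) z + indicator (ball 0 1 - ball 0 r) z"
      using power_le_1[of z] by (auto split: split_indicator)
  qed
  also have "\<dots> = J r + emeasure lborel (ball (0::complex) 1 - ball 0 r)"
    unfolding J_def by (subst nn_integral_add) auto
  also have "emeasure lborel (ball (0::complex) 1 - ball 0 r) = ennreal (pi * (1 - r\<^sup>2))"
    using r by (subst emeasure_Diff) (auto simp: emeasure_ball_complex ennreal_minus algebra_simps)
  also have "J r = ennreal (r ^ (k + 2) * j)"
    using nn_integral_norm_power_ball_scale[OF r(1), of k] j r by (simp add: J_def ennreal_mult)
  finally have "ennreal j \<le> ennreal (r ^ (k + 2) * j) + ennreal (pi * (1 - r\<^sup>2))"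
    using j by simp
  then have ineq: "j \<le> r ^ (k + 2) * j + pi * (1 - r\<^sup>2)"
    using r j by (simp add: power_le_one ennreal_plus[symmetric] del: ennreal_plus)
  have "r ^ (k + 2) \<le> exp (- (1 / N)) ^ (k + 2)"
    unfolding r_def using exp_ge_add_one_self[of "- (1 / N)"] r by (intro power_mono) (auto simp: r_def)
  also have "\<dots> = exp (real (k + 2) * (- (1 / N)))" by (rule exp_of_nat_mult[symmetric])
  also have "\<dots> = exp (-1)" using N by (simp add: N_def)
  also have "\<dots> \<le> 1 / 2"
    using exp_ge_add_one_self[of 1] by (simp add: exp_minus inverse_eq_divide)
  finally have half: "r ^ (k + 2) * j \<le> 1 / 2 * j" using j by (intro mult_right_mono)
  have "1 - r\<^sup>2 = (2 - 1 / N) / N" using N by (simp add: r_def field_simps power2_eq_square)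
  moreover have "(2 - 1 / N) / N \<le> 2 / N" using N by (intro divide_right_mono) auto
  ultimately have "pi * (1 - r\<^sup>2) \<le> pi * (2 / N)" by (intro mult_left_mono) auto
  then have "j \<le> 1 / 2 * j + pi * (2 / N)" using ineq half by linarith
  then show ?thesis using j by (simp add: J_def N_def ennreal_leI field_simps)
qed

lemma nn_integral_norm_power_unit_ball_mult_le:
  "ennreal (real m) * (\<integral>\<^sup>+z. ennreal (cmod z ^ (2 * m)) * indicator (ball 0 1) z \<partial>lborel) \<le> ennreal (2 * pi)"
proof -
  have "ennreal (real m) * (\<integral>\<^sup>+z. ennreal (cmod z ^ (2 * m)) * indicator (ball 0 1) z \<partial>lborel)
      \<le> ennreal (real m) * ennreal (4 * pi / (real (2 * m) + 2))"
    by (intro mult_left_mono nn_integral_norm_power_unit_ball_le) auto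
  also have "\<dots> = ennreal (real m * (4 * pi / (real (2 * m) + 2)))"
    by (rule ennreal_mult[symmetric]) auto
  also have "\<dots> \<le> ennreal (2 * pi)"
  proof (rule ennreal_leI)
    have "real m / (real (2 * m) + 2) \<le> 1 / 2" by (simp add: field_simps)
    from mult_left_mono[OF this, of "4 * pi"] show "real m * (4 * pi / (real (2 * m) + 2)) \<le> 2 * pi"
      by (simp add: field_simps)
  qed
  finally show ?thesis .
qed

lemma of_nat_mult_power_le:
  fixes r :: real
  assumes "0 \<le> r" "r < 1"
  shows "real k * r ^ (k - 1) \<le> 1 / (1 - r)"
proof -
  have "real k * r ^ (k - 1) = (\<Sum>i<k. r ^ (k - 1))" by simp
  also have "\<dots> \<le> (\<Sum>i<k. r ^ i)"
    by (intro sum_mono power_decreasing) (use assms in auto)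
  also have "\<dots> = (1 - r ^ k) / (1 - r)" using assms by (simp add: sum_gp_strict)
  also have "\<dots> \<le> 1 / (1 - r)" using assms by (intro divide_right_mono) auto
  finally show ?thesis .
qed

section \<open>Weak derivatives of differentiable functions\<close>

lemma tendsto_difference_quotient:
  fixes F :: "'a::real_normed_vector \<Rightarrow> 'b::real_normed_vector"
  assumes deriv: "(F has_derivative F') (at z)" and e: "e \<longlonglongrightarrow> 0" "\<And>n. e n \<noteq> 0"
  shows "(\<lambda>n. (F (z + e n *\<^sub>R v) - F z) /\<^sub>R e n) \<longlonglongrightarrow> F' v"
proof (cases "v = 0")
  case True
  have "F' 0 = 0" using deriv by (simp add: has_derivative_def linear_simps(3))
  then show ?thesis using True by simp
next
  case False
  have lin: "bounded_linear F'" using deriv by (simp add: has_derivative_def)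
  have "((\<lambda>h. norm (F (z + h) - F z - F' h) / norm h) \<longlongrightarrow> 0) (at 0)"
    using deriv by (simp add: has_derivative_at)
  moreover have "filterlim (\<lambda>n. e n *\<^sub>R v) (at 0) sequentially"
    unfolding filterlim_at using tendsto_scaleR[OF e(1) tendsto_const[of v]] e(2) False
    by (auto intro!: always_eventually)
  ultimately have "(\<lambda>n. norm (F (z + e n *\<^sub>R v) - F z - F' (e n *\<^sub>R v)) / norm (e n *\<^sub>R v)) \<longlonglongrightarrow> 0"
    by (rule filterlim_compose)
  then have "(\<lambda>n. norm (F (z + e n *\<^sub>R v) - F z - F' (e n *\<^sub>R v)) / norm (e n *\<^sub>R v) * norm v)
      \<longlonglongrightarrow> 0 * norm v"
    by (rule tendsto_mult_right)
  moreover have "norm (F (z + e n *\<^sub>R v) - F z - F' (e n *\<^sub>R v)) / norm (e n *\<^sub>R v) * norm v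
      = norm ((F (z + e n *\<^sub>R v) - F z) /\<^sub>R e n - F' v)" for n
  proof -
    have "(F (z + e n *\<^sub>R v) - F z) /\<^sub>R e n - F' v = (F (z + e n *\<^sub>R v) - F z - F' (e n *\<^sub>R v)) /\<^sub>R e n"
      using e(2)[of n] by (simp add: linear_scale[OF bounded_linear.linear[OF lin]] algebra_simps)
    then show ?thesis using e(2)[of n] False by (simp add: divide_inverse_commute)
  qed
  ultimately show ?thesis by (simp add: tendsto_norm_zero_iff LIM_zero_iff)
qed

lemma norm_diff_le_directional_derivative_bound:
  fixes F :: "'a::real_normed_vector \<Rightarrow> 'b::real_inner"
  assumes deriv: "\<And>x. (F has_derivative F' x) (at x)"
    and bound: "\<And>x. norm (F' x v) \<le> M" and e: "0 \<le> e"
  shows "norm (F (z + e *\<^sub>R v) - F z) \<le> e * M"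
proof (cases "e = 0")
  case False
  define g where "g t = F (z + t *\<^sub>R v)" for t
  have dg: "(g has_derivative (\<lambda>s. F' (z + t *\<^sub>R v) (s *\<^sub>R v))) (at t)" for t
  proof -
    have "((\<lambda>t. z + t *\<^sub>R v) has_derivative (\<lambda>s. s *\<^sub>R v)) (at t)"
      by (auto intro!: derivative_eq_intros)
    from has_derivative_compose[OF this deriv] show ?thesis by (simp add: g_def[abs_def] o_def)
  qed
  have "continuous_on {0..e} g"
    using dg has_derivative_continuous continuous_at_imp_continuous_on by blast
  then have "\<exists>t\<in>{0<..<e}. norm (g e - g 0) \<le> norm (F' (z + t *\<^sub>R v) ((e - 0) *\<^sub>R v))"
    using e False dg by (intro mvt_general[where f'="\<lambda>t s. F' (z + t *\<^sub>R v) (s *\<^sub>R v)"]) auto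
  then obtain t where "norm (g e - g 0) \<le> norm (F' (z + t *\<^sub>R v) ((e - 0) *\<^sub>R v))" by blast
  also have "\<dots> = e * norm (F' (z + t *\<^sub>R v) v)"
    using e by (simp add: linear_scale[OF bounded_linear.linear[OF has_derivative_bounded_linear[OF deriv]]])
  also have "\<dots> \<le> e * M" using e bound by (intro mult_left_mono) auto
  finally show ?thesis by (simp add: g_def)
qed simp

lemma
  fixes F :: "'a::euclidean_space \<Rightarrow> 'b::{banach, second_countable_topology}"
  assumes [measurable]: "F \<in> borel_measurable borel"
  shows integrable_lborel_translate: "integrable lborel (\<lambda>x. F (x + c)) \<longleftrightarrow> integrable lborel F"
    and integral_lborel_translate: "(\<integral>x. F (x + c) \<partial>lborel) = (\<integral>x. F x \<partial>lborel)"
proof -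
  have "integrable lborel F \<longleftrightarrow> integrable (distr lborel borel ((+) c)) F"
    by (simp add: lborel_distr_plus)
  also have "\<dots> \<longleftrightarrow> integrable lborel (\<lambda>x. F (c + x))" by (rule integrable_distr_eq) auto
  finally show "integrable lborel (\<lambda>x. F (x + c)) \<longleftrightarrow> integrable lborel F" by (simp add: add.commute)
  have "(\<integral>x. F x \<partial>lborel) = (\<integral>x. F x \<partial>distr lborel borel ((+) c))"
    by (simp add: lborel_distr_plus)
  also have "\<dots> = (\<integral>x. F (c + x) \<partial>lborel)" by (rule integral_distr) auto
  finally show "(\<integral>x. F (x + c) \<partial>lborel) = (\<integral>x. F x \<partial>lborel)" by (simp add: add.commute)
qed

lemma integrable_continuous_on_compact_support:
  fixes g :: "'a::euclidean_space \<Rightarrow> 'b::{banach, second_countable_topology}"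
  assumes "compact K" "continuous_on K g" "\<And>x. x \<notin> K \<Longrightarrow> g x = 0"
  shows "integrable lborel g"
proof -
  have "integrable lborel (\<lambda>x. indicator K x *\<^sub>R g x)"
    using assms(1,2) by (rule borel_integrable_compact)
  moreover have "indicator K x *\<^sub>R g x = g x" for x
    using assms(3)[of x] by (cases "x \<in> K") auto
  ultimately show ?thesis by simp
qed

text \<open>The difference quotients along \<open>v\<close> have integral zero by translation invariance, and
  they converge to the directional derivative under a common integrable bound.\<close>
lemma integral_directional_derivative_eq_0:
  fixes F :: "'a::euclidean_space \<Rightarrow> 'b::euclidean_space"
  assumes deriv: "\<And>x. (F has_derivative F' x) (at x)"
    and bound: "\<And>x. norm (F' x v) \<le> M"
    and support: "\<And>x. R < norm x \<Longrightarrow> F x = 0"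
  shows "integrable lborel (\<lambda>x. F' x v)" "(\<integral>x. F' x v \<partial>lborel) = 0"
proof -
  have cont: "continuous_on UNIV F"
    using deriv has_derivative_continuous continuous_at_imp_continuous_on by blast
  have [measurable]: "F \<in> borel_measurable borel" by (rule borel_measurable_continuous_onI[OF cont])
  have F_int: "integrable lborel F"
    using support by (intro integrable_continuous_on_compact_support[of "cball 0 \<bar>R\<bar>"]
        continuous_on_subset[OF cont]) force+
  define e where "e n = 1 / real (Suc n)" for n
  have e: "0 < e n" "e n \<le> 1" for n by (auto simp: e_def)
  have e_lim: "e \<longlonglongrightarrow> 0" unfolding e_def by (rule LIMSEQ_Suc[OF lim_inverse_n'])
  define q where "q n x = (F (x + e n *\<^sub>R v) - F x) /\<^sub>R e n" for n x
  have [measurable]: "q n \<in> borel_measurable borel" for n unfolding q_def by measurable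
  have q_lim: "(\<lambda>n. q n x) \<longlonglongrightarrow> F' x v" for x
    unfolding q_def by (rule tendsto_difference_quotient[OF deriv e_lim]) (metis e(1) order_less_irrefl)
  have [measurable]: "(\<lambda>x. F' x v) \<in> borel_measurable borel"
    by (rule borel_measurable_LIMSEQ_metric[OF _ q_lim]) simp
  define w where "w x = indicator (cball 0 (\<bar>R\<bar> + norm v)) x *\<^sub>R M" for x :: 'a
  have w_int: "integrable lborel w" unfolding w_def by (rule borel_integrable_compact) auto
  have q_dom: "norm (q n x) \<le> w x" for n x
  proof (cases "norm x \<le> \<bar>R\<bar> + norm v")
    case True
    have "norm (F (x + e n *\<^sub>R v) - F x) \<le> e n * M"
      by (rule norm_diff_le_directional_derivative_bound[OF deriv bound]) (simp add: e(1) less_imp_le)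
    moreover have "norm (q n x) = norm (F (x + e n *\<^sub>R v) - F x) / e n"
      unfolding q_def norm_scaleR using e(1)[of n] by (simp add: field_simps)
    ultimately show ?thesis using True e(1)[of n] by (simp add: w_def pos_divide_le_eq mult.commute)
  next
    case False
    have "norm (e n *\<^sub>R v) \<le> norm v" using e[of n] by (simp add: mult_left_le_one_le)
    moreover have "norm x - norm (e n *\<^sub>R v) \<le> norm (x + e n *\<^sub>R v)"
      using norm_triangle_ineq2[of x "- (e n *\<^sub>R v)"] by simp
    ultimately have "R < norm (x + e n *\<^sub>R v)" "R < norm x"
      using False abs_ge_self[of R] norm_ge_zero[of v] by linarith+
    then show ?thesis using False by (simp add: q_def w_def support)
  qed
  have q_integral: "(\<integral>x. q n x \<partial>lborel) = 0" for n
    using integrable_lborel_translate[of F "e n *\<^sub>R v"] integral_lborel_translate[of F "e n *\<^sub>R v"] F_int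
    by (simp add: q_def)
  show "integrable lborel (\<lambda>x. F' x v)"
    by (rule integrable_dominated_convergence[where s=q and w=w]) (use w_int q_lim q_dom in auto)
  have "(\<lambda>n. \<integral>x. q n x \<partial>lborel) \<longlonglongrightarrow> (\<integral>x. F' x v \<partial>lborel)"
    by (rule integral_dominated_convergence[where s=q and w=w]) (use w_int q_lim q_dom in auto)
  then show "(\<integral>x. F' x v \<partial>lborel) = 0" by (simp add: q_integral LIMSEQ_const_iff)
qed

lemma smooth_fun_has_derivative:
  "smooth_fun f \<Longrightarrow> (f has_derivative frechet_derivative f (at z)) (at z)"
  by (erule smooth_fun.cases) (simp add: frechet_derivative_works[symmetric])

lemma smooth_fun_continuous: "smooth_fun f \<Longrightarrow> continuous_on UNIV f"
  by (meson continuous_at_imp_continuous_on has_derivative_continuous smooth_fun_has_derivative)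

lemma smooth_fun_partial_continuous:
  "smooth_fun f \<Longrightarrow> v = 1 \<or> v = \<i> \<Longrightarrow> continuous_on UNIV (\<lambda>z. frechet_derivative f (at z) v)"
  by (erule smooth_fun.cases) (auto intro: smooth_fun_continuous)

lemma test_function_outside_support:
  assumes "test_function U \<psi>" "z \<notin> closure {z. \<psi> z \<noteq> 0}"
  shows "\<psi> z = 0" "frechet_derivative \<psi> (at z) = (\<lambda>_. 0)"
proof -
  define S where "S = {z. \<psi> z \<noteq> 0}"
  have vanish: "\<psi> x = 0" if "x \<notin> closure S" for x
    using that closure_subset[of S] unfolding S_def by blast
  then show "\<psi> z = 0" using assms(2)[folded S_def] by blast
  have "(\<psi> has_derivative (\<lambda>_. 0)) (at z)"
    by (rule has_derivative_transform_within_open[OF has_derivative_const[where c=0] open_Compl[OF closed_closure[of S]]])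
       (use assms(2)[folded S_def] vanish in auto)
  moreover have "(\<psi> has_derivative frechet_derivative \<psi> (at z)) (at z)"
    using assms(1) smooth_fun_has_derivative by (auto simp: test_function_def)
  ultimately show "frechet_derivative \<psi> (at z) = (\<lambda>_. 0)"
    by (intro has_derivative_unique)
qed

lemma has_derivative_mult_test_function:
  fixes f :: "complex \<Rightarrow> complex"
  assumes deriv: "\<And>z. z \<in> U \<Longrightarrow> (f has_derivative f' z) (at z)" and \<psi>: "test_function U \<psi>"
  shows "((\<lambda>z. f z * of_real (\<psi> z)) has_derivative
    (\<lambda>w. f' z w * of_real (\<psi> z) + f z * of_real (frechet_derivative \<psi> (at z) w))) (at z)"
proof -
  define S where "S = {z. \<psi> z \<noteq> 0}"
  note outside = test_function_outside_support[OF \<psi>, folded S_def]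
  show ?thesis
  proof (cases "z \<in> closure S")
    case True
    then have "z \<in> U" using \<psi> by (auto simp: test_function_def S_def)
    have "(\<psi> has_derivative frechet_derivative \<psi> (at z)) (at z)"
      using \<psi> smooth_fun_has_derivative by (auto simp: test_function_def)
    from has_derivative_mult[OF deriv[OF \<open>z \<in> U\<close>] has_derivative_of_real[OF this]] show ?thesis
      by (simp add: add.commute)
  next
    case False
    have "((\<lambda>z. f z * of_real (\<psi> z)) has_derivative (\<lambda>_. 0)) (at z)"
      by (rule has_derivative_transform_within_open[OF has_derivative_const[where c=0] open_Compl[OF closed_closure[of S]]])
         (use False outside(1) in auto)
    then show ?thesis using outside[OF False] by simp
  qed
qed

lemma set_lebesgue_integral_eq_integral:
  "(\<And>x. x \<notin> A \<Longrightarrow> f x = 0) \<Longrightarrow> (LINT x:A|M. f x) = (\<integral>x. f x \<partial>M)"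
  unfolding set_lebesgue_integral_def by (rule Bochner_Integration.integral_cong) (auto split: split_indicator)

text \<open>The product \<open>f \<psi>\<close> has a bounded, compactly supported derivative, so its directional
  derivative integrates to zero; expand it by the product rule.\<close>
lemma integral_mult_test_function_partial:
  fixes f :: "complex \<Rightarrow> complex"
  assumes deriv: "\<And>z. z \<in> U \<Longrightarrow> (f has_derivative f' z) (at z)"
    and bounded: "\<And>K. compact K \<Longrightarrow> K \<subseteq> U \<Longrightarrow> \<exists>B. \<forall>z\<in>K. cmod (f' z v) \<le> B"
    and v: "v = 1 \<or> v = \<i>" and \<psi>: "test_function U \<psi>"
  shows "(\<integral>z. f z * of_real (frechet_derivative \<psi> (at z) v) \<partial>lborel) = - (\<integral>z. f' z v * of_real (\<psi> z) \<partial>lborel)"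
proof -
  define K where "K = closure {z. \<psi> z \<noteq> 0}"
  define P where "P z = frechet_derivative \<psi> (at z) v" for z
  have K: "compact K" "K \<subseteq> U" and smooth: "smooth_fun \<psi>"
    using \<psi> unfolding test_function_def K_def by blast+
  note outside = test_function_outside_support[OF \<psi>, folded K_def]
  have "isCont f z" if "z \<in> K" for z
    using deriv[of z] that K(2) by (auto dest: has_derivative_continuous)
  then have cont_f: "continuous_on K f" by (intro continuous_at_imp_continuous_on) blast
  have cont_P: "continuous_on K P"
    unfolding P_def by (rule continuous_on_subset[OF smooth_fun_partial_continuous[OF smooth v]]) simp
  obtain B where B: "\<And>z. z \<in> K \<Longrightarrow> cmod (f' z v) \<le> B" using bounded[OF K] by blast
  obtain B\<psi> where B\<psi>: "B\<psi> \<ge> 0" "\<And>z. z \<in> K \<Longrightarrow> norm (\<psi> z) \<le> B\<psi>"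
    using continuous_on_compact_bound[OF K(1) continuous_on_subset[OF smooth_fun_continuous[OF smooth]]] by blast
  obtain Bf where Bf: "Bf \<ge> 0" "\<And>z. z \<in> K \<Longrightarrow> norm (f z) \<le> Bf"
    using continuous_on_compact_bound[OF K(1) cont_f] by blast
  obtain BP where BP: "BP \<ge> 0" "\<And>z. z \<in> K \<Longrightarrow> norm (P z) \<le> BP"
    using continuous_on_compact_bound[OF K(1) cont_P] by blast
  obtain R where R: "\<And>z. z \<in> K \<Longrightarrow> cmod z \<le> R"
    using compact_imp_bounded[OF K(1)] by (auto simp: bounded_iff)
  define D where "D z w = f' z w * of_real (\<psi> z) + f z * of_real (frechet_derivative \<psi> (at z) w)" for z w
  have dF: "((\<lambda>z. f z * of_real (\<psi> z)) has_derivative D z) (at z)" for z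
    unfolding D_def by (rule has_derivative_mult_test_function[OF deriv \<psi>])
  have D_bound: "cmod (D z v) \<le> \<bar>B\<bar> * B\<psi> + Bf * BP" for z
  proof (cases "z \<in> K")
    case True
    have "cmod (D z v) \<le> cmod (f' z v) * norm (\<psi> z) + cmod (f z) * norm (P z)"
      unfolding D_def P_def by (rule order_trans[OF norm_triangle_ineq]) (simp add: norm_mult)
    also have "\<dots> \<le> \<bar>B\<bar> * B\<psi> + Bf * BP"
      using B[OF True] B\<psi> Bf BP True by (intro add_mono mult_mono) auto
    finally show ?thesis .
  next
    case False
    then have "D z v = 0" using outside[OF False] by (simp add: D_def)
    then show ?thesis using B\<psi>(1) Bf(1) BP(1) by simp
  qed
  have support: "f z * of_real (\<psi> z) = 0" if "R < cmod z" for z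
  proof -
    have "z \<notin> K" using that R by fastforce
    then show ?thesis using outside(1) by simp
  qed
  note D_integral = integral_directional_derivative_eq_0[OF dF D_bound support]
  have integrable_fP: "integrable lborel (\<lambda>z. f z * of_real (P z))"
    using cont_f cont_P outside(2)
    by (intro integrable_continuous_on_compact_support[OF K(1)] continuous_intros) (auto simp: P_def)
  have "(\<integral>z. D z v \<partial>lborel) = (\<integral>z. f' z v * of_real (\<psi> z) \<partial>lborel) + (\<integral>z. f z * of_real (P z) \<partial>lborel)"
    using Bochner_Integration.integrable_diff[OF D_integral(1) integrable_fP]
    unfolding D_def P_def by (intro Bochner_Integration.integral_add integrable_fP[unfolded P_def]) simp
  then show ?thesis using D_integral(2) by (simp add: P_def eq_neg_iff_add_eq_0 add.commute)
qed

lemma weak_partial_of_has_derivative: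
  fixes f :: "complex \<Rightarrow> complex"
  assumes deriv: "\<And>z. z \<in> U \<Longrightarrow> (f has_derivative f' z) (at z)"
    and bounded: "\<And>K. compact K \<Longrightarrow> K \<subseteq> U \<Longrightarrow> \<exists>B. \<forall>z\<in>K. cmod (f' z v) \<le> B"
    and v: "v = 1 \<or> v = \<i>"
  shows "weak_partial U v f (\<lambda>z. f' z v)"
  unfolding weak_partial_def
proof (intro allI impI)
  fix \<psi> assume \<psi>: "test_function U \<psi>"
  define S where "S = {z. \<psi> z \<noteq> 0}"
  have "z \<notin> closure S" if "z \<notin> U" for z
    using that \<psi> by (auto simp: test_function_def S_def)
  then have outside_U: "\<psi> z = 0" "frechet_derivative \<psi> (at z) = (\<lambda>_. 0)" if "z \<notin> U" for z
    using test_function_outside_support[OF \<psi>, folded S_def] that by auto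
  have "(LINT z:U|lborel. f z * of_real (frechet_derivative \<psi> (at z) v))
      = (\<integral>z. f z * of_real (frechet_derivative \<psi> (at z) v) \<partial>lborel)"
    "(LINT z:U|lborel. f' z v * of_real (\<psi> z)) = (\<integral>z. f' z v * of_real (\<psi> z) \<partial>lborel)"
    by (intro set_lebesgue_integral_eq_integral; simp add: outside_U)+
  then show "(LINT z:U|lborel. f z * of_real (frechet_derivative \<psi> (at z) v))
      = - (LINT z:U|lborel. f' z v * of_real (\<psi> z))"
    using integral_mult_test_function_partial[OF deriv bounded v \<psi>] by simp
qed

section \<open>The lacunary radial stretch\<close>

definition lacunary_freq :: "nat \<Rightarrow> nat" where
  "lacunary_freq n = 2 ^ 4 ^ n"

text \<open>The series converges on the closed unit disc only; elsewhere \<open>lacunary_V\<close> is a junk value,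
  which never matters below.\<close>
definition lacunary_V :: "complex \<Rightarrow> real" where
  "lacunary_V z = (\<Sum>n. (1 / 2) ^ n * (Re (z ^ lacunary_freq n))\<^sup>2)"

definition lacunary_map :: "complex \<Rightarrow> complex" where
  "lacunary_map z = z * of_real (1 + lacunary_V z)"

definition lacunary_domain :: "complex set" where
  "lacunary_domain = lacunary_map ` ball 0 1"

lemma lacunary_freq_ge_1: "lacunary_freq n \<ge> 1"
  by (simp add: lacunary_freq_def)

lemma inj_lacunary_freq: "inj lacunary_freq"
  by (rule strict_mono_imp_inj_on, rule strict_monoI) (simp add: lacunary_freq_def)

lemma summable_half_power: "summable (\<lambda>n. (1 / 2 :: real) ^ n)"
  by (rule summable_geometric) simp

lemma suminf_half_power: "(\<Sum>n. (1 / 2 :: real) ^ n) = 2"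
  using suminf_geometric[of "1 / 2 :: real"] by simp

lemma lacunary_term_bound:
  assumes "cmod z \<le> 1"
  shows "\<bar>(1 / 2) ^ n * (Re (z ^ k))\<^sup>2\<bar> \<le> (1 / 2 :: real) ^ n"
proof -
  have "\<bar>Re (z ^ k)\<bar> \<le> 1"
    by (metis abs_Re_le_cmod norm_power order_trans power_le_one norm_ge_zero assms)
  then have "(Re (z ^ k))\<^sup>2 \<le> 1" by (simp add: abs_square_le_1)
  then show ?thesis by (simp add: mult_left_le)
qed

lemma summable_lacunary_V:
  "cmod z \<le> 1 \<Longrightarrow> summable (\<lambda>n. (1 / 2) ^ n * (Re (z ^ lacunary_freq n))\<^sup>2)"
  by (rule summable_comparison_test[OF _ summable_half_power]) (use lacunary_term_bound in auto)

lemma lacunary_V_nonneg: "cmod z \<le> 1 \<Longrightarrow> lacunary_V z \<ge> 0"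
  unfolding lacunary_V_def by (rule suminf_nonneg[OF summable_lacunary_V]) simp_all

lemma lacunary_V_le_2:
  assumes "cmod z \<le> 1"
  shows "lacunary_V z \<le> 2"
proof -
  have "lacunary_V z \<le> (\<Sum>n. (1 / 2) ^ n)" unfolding lacunary_V_def
    by (rule suminf_le[OF _ summable_lacunary_V[OF assms] summable_half_power])
       (use lacunary_term_bound[OF assms] abs_le_D1 in blast)
  then show ?thesis by (simp add: suminf_half_power)
qed

lemma abs_one_plus_lacunary_V_le: "cmod z \<le> 1 \<Longrightarrow> \<bar>1 + lacunary_V z\<bar> \<le> 3"
  using lacunary_V_nonneg[of z] lacunary_V_le_2[of z] by simp

lemma continuous_on_lacunary_V: "continuous_on (cball 0 1) lacunary_V"
proof -
  have "uniform_limit (cball 0 1) (\<lambda>n z. \<Sum>i<n. (1 / 2) ^ i * (Re (z ^ lacunary_freq i))\<^sup>2) lacunary_V sequentially"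
    unfolding lacunary_V_def[abs_def]
    by (rule Weierstrass_m_test[OF _ summable_half_power]) (use lacunary_term_bound in auto)
  then show ?thesis
    by (rule uniform_limit_theorem[rotated]) (auto intro!: always_eventually continuous_intros)
qed

lemma lacunary_V_radial_mono:
  assumes z: "cmod z \<le> 1" and c: "0 \<le> c" "c \<le> 1"
  shows "lacunary_V (of_real c * z) \<le> lacunary_V z"
  unfolding lacunary_V_def
proof (intro suminf_le summable_lacunary_V)
  fix n
  have "(Re ((of_real c * z) ^ lacunary_freq n))\<^sup>2 = (c ^ lacunary_freq n)\<^sup>2 * (Re (z ^ lacunary_freq n))\<^sup>2"
    by (simp add: power_mult_distrib power2_eq_square flip: of_real_power)
  also have "\<dots> \<le> (Re (z ^ lacunary_freq n))\<^sup>2"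
    using c by (intro mult_left_le_one_le) (auto simp: power_le_one)
  finally show "(1 / 2) ^ n * (Re ((of_real c * z) ^ lacunary_freq n))\<^sup>2 \<le> (1 / 2) ^ n * (Re (z ^ lacunary_freq n))\<^sup>2"
    by simp
qed (use z c in \<open>auto simp: norm_mult mult_le_one\<close>)

lemma continuous_on_lacunary_map: "continuous_on (cball 0 1) lacunary_map"
  unfolding lacunary_map_def by (intro continuous_intros continuous_on_lacunary_V)

lemma inj_on_lacunary_map: "inj_on lacunary_map (cball 0 1)"
  unfolding lacunary_map_def[abs_def]
  by (rule inj_on_radial_stretch) (auto intro: lacunary_V_nonneg lacunary_V_radial_mono)

lemma jordan_domain_lacunary_domain: "jordan_domain lacunary_domain"
  unfolding lacunary_domain_def
  by (rule jordan_domain_image_unit_ball[OF continuous_on_lacunary_map inj_on_lacunary_map])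

lemma homeomorphism_lacunary_map:
  "\<exists>k. homeomorphism (cball 0 1) (closure lacunary_domain) lacunary_map k"
  unfolding lacunary_domain_def closure_image_unit_ball[OF continuous_on_lacunary_map]
  by (rule homeomorphism_compact) (auto intro: continuous_on_lacunary_map inj_on_lacunary_map)

section \<open>Divergence of the boundary energy\<close>

lemma Re_cis_power: "Re (cis \<theta> ^ n) = cos (real n * \<theta>)"
  unfolding Complex.DeMoivre by simp

lemma lacunary_V_cis: "lacunary_V (cis \<theta>) = (\<Sum>n. (1 / 2) ^ n * (cos (real (lacunary_freq n) * \<theta>))\<^sup>2)"
  unfolding lacunary_V_def Re_cis_power ..

lemma norm_lacunary_map_cis: "cmod (lacunary_map (cis \<theta>)) = 1 + lacunary_V (cis \<theta>)"
  using lacunary_V_nonneg[of "cis \<theta>"] unfolding lacunary_map_def norm_mult norm_of_real by simp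

lemma isCont_lacunary_V_cis: "isCont (\<lambda>\<theta>. lacunary_V (cis \<theta>)) \<theta>"
proof -
  have "continuous_on UNIV (\<lambda>\<theta>. lacunary_V (cis \<theta>))"
    by (rule continuous_on_compose2[OF continuous_on_lacunary_V]) (auto intro!: continuous_intros)
  then show ?thesis by (simp add: continuous_on_eq_continuous_at)
qed

lemma lacunary_boundary_energy_ge:
  "ennreal ((1 / 2) ^ n * pi / 4 * ln (real (lacunary_freq n)))
   \<le> (\<integral>\<^sup>+t\<in>{0..2*pi}. (\<integral>\<^sup>+s\<in>{0..2*pi}. internal_dist Y (lacunary_map (cis s)) (lacunary_map (cis t))
        / ennreal (cmod (cis s - cis t)) \<partial>lborel) \<partial>lborel)"
proof -
  have "(\<integral>t. ((1 + lacunary_V (cis (t + u))) - (1 + lacunary_V (cis t))) * cos (2 * real (lacunary_freq n) * t)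
      * indicator {0..pi} t \<partial>lborel) = (1 / 2) ^ n * pi / 4 * (cos (2 * real (lacunary_freq n) * u) - 1)" for u
    using cos_sq_series_increment_cos_integral[OF summable_half_power _ inj_lacunary_freq lacunary_freq_ge_1]
    by (simp add: lacunary_V_cis)
  then have "ennreal ((1 / 2) ^ n * pi / 4 * ln (real (lacunary_freq n)))
      \<le> (\<integral>\<^sup>+u\<in>{0..pi}. (\<integral>\<^sup>+t\<in>{0..pi}. ennreal (\<bar>(1 + lacunary_V (cis (t + u))) - (1 + lacunary_V (cis t))\<bar> / u)
          \<partial>lborel) \<partial>lborel)"
    using lacunary_freq_ge_1[of n]
    by (intro increment_energy_ge_ln) (auto intro!: continuous_intros isCont_lacunary_V_cis)
  also have "\<dots> \<le> (\<integral>\<^sup>+t\<in>{0..2*pi}. (\<integral>\<^sup>+s\<in>{0..2*pi}. internal_dist Y (lacunary_map (cis s)) (lacunary_map (cis t))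
        / ennreal (cmod (cis s - cis t)) \<partial>lborel) \<partial>lborel)"
    by (rule increment_energy_le_boundary_energy[where R="\<lambda>\<theta>. 1 + lacunary_V (cis \<theta>)", OF norm_lacunary_map_cis])
       (auto intro!: continuous_intros isCont_lacunary_V_cis)
  finally show ?thesis .
qed

lemma lacunary_boundary_energy_eq_infinity:
  "(\<integral>\<^sup>+t\<in>{0..2*pi}. (\<integral>\<^sup>+s\<in>{0..2*pi}. internal_dist Y (lacunary_map (cis s)) (lacunary_map (cis t))
      / ennreal (cmod (cis s - cis t)) \<partial>lborel) \<partial>lborel) = \<infinity>"
  (is "?E = \<infinity>")
proof (rule ccontr)
  assume "?E \<noteq> \<infinity>"
  then obtain r where r: "?E = ennreal r" "r \<ge> 0" by (cases ?E rule: ennreal_cases) auto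
  have bound_eq: "(1 / 2) ^ n * pi / 4 * ln (real (lacunary_freq n)) = pi / 4 * ln 2 * 2 ^ n" for n
  proof -
    have "(1 / 2) ^ n * real (4 ^ n) = (2::real) ^ n"
      by (simp add: power_mult_distrib[symmetric])
    then show ?thesis by (simp add: lacunary_freq_def ln_realpow algebra_simps)
  qed
  obtain n where "r / (pi / 4 * ln 2) < 2 ^ n" using real_arch_pow[of 2 "r / (pi / 4 * ln 2)"] by auto
  then have "r < pi / 4 * ln 2 * 2 ^ n" by (simp add: divide_less_eq mult.commute)
  moreover have "ennreal ((1 / 2) ^ n * pi / 4 * ln (real (lacunary_freq n))) \<le> ennreal r"
    using lacunary_boundary_energy_ge[of n Y] unfolding r(1) .
  then have "pi / 4 * ln 2 * 2 ^ n \<le> r" using r(2) unfolding bound_eq by simp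
  ultimately show False by simp
qed

section \<open>Sobolev regularity\<close>

definition lacunary_term_deriv :: "nat \<Rightarrow> complex \<Rightarrow> complex \<Rightarrow> real" where
  "lacunary_term_deriv n z v = (1 / 2) ^ n *
     (2 * Re (z ^ lacunary_freq n) * Re (of_nat (lacunary_freq n) * z ^ (lacunary_freq n - 1) * v))"

definition lacunary_V_deriv :: "complex \<Rightarrow> complex \<Rightarrow> real" where
  "lacunary_V_deriv z v = (\<Sum>n. lacunary_term_deriv n z v)"

definition lacunary_map_deriv :: "complex \<Rightarrow> complex \<Rightarrow> complex" where
  "lacunary_map_deriv z v = v * of_real (1 + lacunary_V z) + z * of_real (lacunary_V_deriv z v)"

lemma has_derivative_Re_power_sq:
  fixes z :: complex and m :: nat
  shows "((\<lambda>z. c * (Re (z ^ m))\<^sup>2) has_derivative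
     (\<lambda>v. c * (2 * Re (z ^ m) * Re (of_nat m * z ^ (m - 1) * v)))) (at z within S)"
proof -
  have "((\<lambda>z. z ^ m) has_derivative (\<lambda>v. of_nat m * z ^ (m - 1) * v)) (at z within S)"
    using has_derivative_power[OF has_derivative_ident, where n=m] by (simp add: ac_simps)
  then have Re_deriv: "((\<lambda>z. Re (z ^ m)) has_derivative (\<lambda>v. Re (of_nat m * z ^ (m - 1) * v))) (at z within S)"
    by (rule bounded_linear.has_derivative[OF bounded_linear_Re])
  show ?thesis
    using has_derivative_mult[OF Re_deriv Re_deriv]
    by (auto intro!: derivative_eq_intros simp: power2_eq_square algebra_simps)
qed

lemma abs_Re_power_sq_deriv_le:
  fixes z v :: complex
  assumes "c \<ge> 0"
  shows "\<bar>c * (2 * Re (z ^ m) * Re (of_nat m * z ^ (m - 1) * v))\<bar>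
    \<le> c * (2 * real m * cmod z ^ m * cmod z ^ (m - 1) * cmod v)"
proof -
  have "\<bar>Re (z ^ m)\<bar> \<le> cmod z ^ m" by (metis abs_Re_le_cmod norm_power)
  moreover have "\<bar>Re (of_nat m * z ^ (m - 1) * v)\<bar> \<le> cmod (of_nat m * z ^ (m - 1) * v)"
    by (rule abs_Re_le_cmod)
  moreover have "cmod (of_nat m * z ^ (m - 1) * v) = real m * cmod z ^ (m - 1) * cmod v"
    by (simp add: norm_mult norm_power)
  ultimately have "\<bar>Re (z ^ m)\<bar> * \<bar>Re (of_nat m * z ^ (m - 1) * v)\<bar> \<le> cmod z ^ m * (real m * cmod z ^ (m - 1) * cmod v)"
    by (intro mult_mono) auto
  then show ?thesis using assms by (simp add: abs_mult mult_left_mono ac_simps)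
qed

lemma abs_lacunary_term_deriv_le:
  "\<bar>lacunary_term_deriv n z v\<bar>
     \<le> (1 / 2) ^ n * (2 * real (lacunary_freq n) * cmod z ^ lacunary_freq n * cmod z ^ (lacunary_freq n - 1) * cmod v)"
  unfolding lacunary_term_deriv_def by (rule abs_Re_power_sq_deriv_le) simp

lemma abs_lacunary_term_deriv_le_radius:
  assumes z: "cmod z \<le> r" and r: "0 \<le> r" "r < 1"
  shows "\<bar>lacunary_term_deriv n z v\<bar> \<le> (1 / 2) ^ n * (2 / (1 - r)) * cmod v"
proof -
  have "cmod z ^ lacunary_freq n \<le> 1" using z r by (intro power_le_one) auto
  moreover have "real (lacunary_freq n) * cmod z ^ (lacunary_freq n - 1) \<le> real (lacunary_freq n) * r ^ (lacunary_freq n - 1)"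
    using z by (intro mult_left_mono power_mono) auto
  moreover have "real (lacunary_freq n) * r ^ (lacunary_freq n - 1) \<le> 1 / (1 - r)"
    by (rule of_nat_mult_power_le[OF r])
  ultimately have "cmod z ^ lacunary_freq n * (real (lacunary_freq n) * cmod z ^ (lacunary_freq n - 1)) \<le> 1 * (1 / (1 - r))"
    by (intro mult_mono) auto
  then have "((1 / 2) ^ n * 2 * cmod v) * (cmod z ^ lacunary_freq n * (real (lacunary_freq n) * cmod z ^ (lacunary_freq n - 1)))
      \<le> ((1 / 2) ^ n * 2 * cmod v) * (1 * (1 / (1 - r)))"
    by (rule mult_left_mono) simp
  then have "(1 / 2) ^ n * (2 * real (lacunary_freq n) * cmod z ^ lacunary_freq n * cmod z ^ (lacunary_freq n - 1) * cmod v)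
      \<le> (1 / 2) ^ n * (2 / (1 - r)) * cmod v"
    by (simp add: ac_simps)
  then show ?thesis using abs_lacunary_term_deriv_le[of n z v] by linarith
qed

lemma summable_lacunary_term_deriv:
  assumes "cmod z < 1"
  shows "summable (\<lambda>n. \<bar>lacunary_term_deriv n z v\<bar>)"
proof (rule summable_comparison_test)
  show "summable (\<lambda>n. (1 / 2) ^ n * (2 / (1 - cmod z)) * cmod v)"
    by (intro summable_mult2 summable_half_power)
  show "\<exists>N. \<forall>n\<ge>N. norm \<bar>lacunary_term_deriv n z v\<bar> \<le> (1 / 2) ^ n * (2 / (1 - cmod z)) * cmod v"
    using abs_lacunary_term_deriv_le_radius[OF order.refl _ assms] by auto
qed

lemma lacunary_term_deriv_tail_le:
  assumes z: "cmod z \<le> r" and r: "0 \<le> r" "r < 1"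
  shows "\<bar>\<Sum>i. lacunary_term_deriv (i + n) z v\<bar> \<le> (1 / 2) ^ n * (4 / (1 - r)) * cmod v"
proof -
  have bound: "summable (\<lambda>i. (1 / 2) ^ (i + n) * (2 / (1 - r)) * cmod v)"
    by (intro summable_mult2 summable_ignore_initial_segment summable_half_power)
  have "\<bar>\<Sum>i. lacunary_term_deriv (i + n) z v\<bar> \<le> (\<Sum>i. \<bar>lacunary_term_deriv (i + n) z v\<bar>)"
    by (intro summable_rabs summable_comparison_test[OF _ bound])
       (use abs_lacunary_term_deriv_le_radius[OF z r] in auto)
  also have "\<dots> \<le> (\<Sum>i. (1 / 2) ^ (i + n) * (2 / (1 - r)) * cmod v)"
    by (intro suminf_le bound summable_comparison_test[OF _ bound])
       (use abs_lacunary_term_deriv_le_radius[OF z r] in auto)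
  also have "\<dots> = (\<Sum>i. (1 / 2) ^ i * ((1 / 2) ^ n * (2 / (1 - r)) * cmod v))"
    by (simp add: power_add ac_simps)
  also have "\<dots> = (\<Sum>i. (1 / 2) ^ i) * ((1 / 2) ^ n * (2 / (1 - r)) * cmod v)"
    by (rule suminf_mult2[OF summable_half_power, symmetric])
  also have "\<dots> = (1 / 2) ^ n * (4 / (1 - r)) * cmod v"
    by (simp add: suminf_half_power)
  finally show ?thesis .
qed

lemma lacunary_V_deriv_partial_sums_uniform:
  assumes r: "0 \<le> r" "r < 1" and e: "e > 0"
  shows "\<forall>\<^sub>F n in sequentially. \<forall>x\<in>ball 0 r. \<forall>h.
    norm ((\<Sum>i<n. lacunary_term_deriv i x h) - lacunary_V_deriv x h) \<le> e * norm h"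
proof -
  have "(\<lambda>n. (1 / 2 :: real) ^ n) \<longlonglongrightarrow> 0" by (rule LIMSEQ_power_zero) simp
  then have "\<forall>\<^sub>F n in sequentially. (1 / 2 :: real) ^ n < e / (4 / (1 - r))"
    using r e by (intro order_tendstoD) auto
  then show ?thesis
  proof eventually_elim
    case (elim n)
    show ?case
    proof (intro ballI allI)
      fix x h :: complex assume "x \<in> ball 0 r"
      then have x: "cmod x \<le> r" by simp
      have summable: "summable (\<lambda>i. lacunary_term_deriv i x h)"
        using x r by (intro summable_rabs_cancel[OF summable_lacunary_term_deriv]) auto
      have "norm ((\<Sum>i<n. lacunary_term_deriv i x h) - lacunary_V_deriv x h) = \<bar>\<Sum>i. lacunary_term_deriv (i + n) x h\<bar>"
        unfolding lacunary_V_deriv_def suminf_minus_initial_segment[OF summable] by simp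
      also have "\<dots> \<le> (1 / 2) ^ n * (4 / (1 - r)) * cmod h" by (rule lacunary_term_deriv_tail_le[OF x r])
      also have "\<dots> \<le> e * cmod h"
      proof (rule mult_right_mono)
        show "(1 / 2) ^ n * (4 / (1 - r)) \<le> e" using elim r by (simp add: less_divide_eq divide_le_eq)
      qed simp
      finally show "norm ((\<Sum>i<n. lacunary_term_deriv i x h) - lacunary_V_deriv x h) \<le> e * norm h" by simp
    qed
  qed
qed

lemma has_derivative_lacunary_V:
  assumes z: "cmod z < 1"
  shows "(lacunary_V has_derivative lacunary_V_deriv z) (at z)"
proof -
  define r where "r = (1 + cmod z) / 2"
  have r: "0 \<le> r" "r < 1" and "z \<in> ball 0 r" using z by (auto simp: r_def)
  have "\<exists>g. \<forall>x\<in>ball 0 r. (\<lambda>n. (1 / 2) ^ n * (Re (x ^ lacunary_freq n))\<^sup>2) sums g x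
      \<and> (g has_derivative lacunary_V_deriv x) (at x within ball 0 r)"
  proof (rule has_derivative_series[OF convex_ball _ lacunary_V_deriv_partial_sums_uniform[OF r] \<open>z \<in> ball 0 r\<close>])
    show "((\<lambda>x. (1 / 2) ^ n * (Re (x ^ lacunary_freq n))\<^sup>2) has_derivative lacunary_term_deriv n x) (at x within ball 0 r)"
      for n x unfolding lacunary_term_deriv_def[abs_def] by (rule has_derivative_Re_power_sq)
    show "(\<lambda>n. (1 / 2) ^ n * (Re (z ^ lacunary_freq n))\<^sup>2) sums lacunary_V z"
      unfolding lacunary_V_def by (rule summable_sums[OF summable_lacunary_V]) (use z in simp)
  qed
  then obtain g where g: "\<And>x. x \<in> ball 0 r \<Longrightarrow> (\<lambda>n. (1 / 2) ^ n * (Re (x ^ lacunary_freq n))\<^sup>2) sums g x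
      \<and> (g has_derivative lacunary_V_deriv x) (at x within ball 0 r)"
    by blast
  have "g x = lacunary_V x" if "x \<in> ball 0 r" for x
  proof -
    have "cmod x \<le> 1" using that r by simp
    then show ?thesis using g[OF that] unfolding lacunary_V_def
      by (metis sums_unique2 summable_sums summable_lacunary_V)
  qed
  moreover have "(g has_derivative lacunary_V_deriv z) (at z)"
    using g[OF \<open>z \<in> ball 0 r\<close>] at_within_open[OF \<open>z \<in> ball 0 r\<close> open_ball] by simp
  ultimately show ?thesis
    by (rule has_derivative_transform_within_open[OF _ open_ball \<open>z \<in> ball 0 r\<close>, rotated])
qed

lemma has_derivative_lacunary_map:
  "cmod z < 1 \<Longrightarrow> (lacunary_map has_derivative lacunary_map_deriv z) (at z)"
  unfolding lacunary_map_def[abs_def] lacunary_map_deriv_def[abs_def]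
  by (auto intro!: derivative_eq_intros has_derivative_lacunary_V)

lemma abs_lacunary_V_deriv_le:
  assumes "cmod z \<le> r" "0 \<le> r" "r < 1"
  shows "\<bar>lacunary_V_deriv z v\<bar> \<le> 4 / (1 - r) * cmod v"
  using lacunary_term_deriv_tail_le[OF assms, of 0 v] by (simp add: lacunary_V_deriv_def)

lemma norm_lacunary_map_deriv_le:
  assumes z: "cmod z \<le> r" and r: "0 \<le> r" "r < 1"
  shows "cmod (lacunary_map_deriv z v) \<le> (3 + 4 / (1 - r)) * cmod v"
proof -
  have "cmod z \<le> 1" using z r by simp
  then have "cmod (v * of_real (1 + lacunary_V z)) \<le> cmod v * 3"
    unfolding norm_mult norm_of_real by (intro mult_left_mono abs_one_plus_lacunary_V_le) auto
  moreover have "cmod (z * of_real (lacunary_V_deriv z v)) \<le> 1 * (4 / (1 - r) * cmod v)"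
    unfolding norm_mult norm_of_real
    using \<open>cmod z \<le> 1\<close> abs_lacunary_V_deriv_le[OF z r] by (intro mult_mono) auto
  ultimately show ?thesis unfolding lacunary_map_deriv_def
    using norm_triangle_ineq[of "v * of_real (1 + lacunary_V z)" "z * of_real (lacunary_V_deriv z v)"]
    by (simp add: algebra_simps)
qed

lemma norm_lacunary_map_deriv_le_series:
  fixes v :: complex
  assumes z: "cmod z < 1"
  defines "b \<equiv> \<lambda>n. (1 / 2) ^ n * (2 * real (lacunary_freq n)) * cmod z ^ (2 * lacunary_freq n) * cmod v"
  shows "summable b" and "cmod (lacunary_map_deriv z v) \<le> 3 * cmod v + (\<Sum>n. b n)"
proof -
  have term_le: "cmod z * \<bar>lacunary_term_deriv n z v\<bar> \<le> b n" for n
  proof -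
    let ?m = "lacunary_freq n"
    have "cmod z * \<bar>lacunary_term_deriv n z v\<bar>
        \<le> cmod z * ((1 / 2) ^ n * (2 * real ?m * cmod z ^ ?m * cmod z ^ (?m - 1) * cmod v))"
      by (intro mult_left_mono abs_lacunary_term_deriv_le) auto
    also have "\<dots> = (1 / 2) ^ n * (2 * real ?m) * (cmod z ^ ?m * (cmod z * cmod z ^ (?m - 1))) * cmod v"
      by (simp add: ac_simps)
    also have "cmod z * cmod z ^ (?m - 1) = cmod z ^ ?m"
      using lacunary_freq_ge_1[of n] by (metis Suc_diff_1 less_le_trans power_Suc zero_less_one)
    also have "cmod z ^ ?m * cmod z ^ ?m = cmod z ^ (2 * ?m)"
      by (simp add: power_add[symmetric] mult_2)
    finally show ?thesis by (simp add: b_def)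
  qed
  have b_le: "b n \<le> (1 / 2) ^ n * (2 / (1 - cmod z)) * cmod v" for n
  proof -
    let ?m = "lacunary_freq n"
    have "real ?m * cmod z ^ (2 * ?m) \<le> real ?m * cmod z ^ (?m - 1)"
      using z by (intro mult_left_mono power_decreasing) auto
    also have "\<dots> \<le> 1 / (1 - cmod z)" using z by (intro of_nat_mult_power_le) auto
    finally have "((1 / 2) ^ n * 2 * cmod v) * (real ?m * cmod z ^ (2 * ?m)) \<le> ((1 / 2) ^ n * 2 * cmod v) * (1 / (1 - cmod z))"
      by (rule mult_left_mono) simp
    then show ?thesis by (simp add: b_def ac_simps)
  qed
  have majorant: "summable (\<lambda>n. (1 / 2) ^ n * (2 / (1 - cmod z)) * cmod v)"
    by (intro summable_mult2 summable_half_power)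
  show summable_b: "summable b"
    by (rule summable_comparison_test'[OF majorant, where N=0]) (use b_le in \<open>auto simp: b_def\<close>)
  have summable_terms: "summable (\<lambda>n. \<bar>lacunary_term_deriv n z v\<bar>)"
    by (rule summable_lacunary_term_deriv[OF z])
  have "cmod (z * of_real (lacunary_V_deriv z v)) \<le> cmod z * (\<Sum>n. \<bar>lacunary_term_deriv n z v\<bar>)"
    unfolding norm_mult norm_of_real lacunary_V_deriv_def
    by (intro mult_left_mono summable_rabs summable_terms) auto
  also have "\<dots> = (\<Sum>n. cmod z * \<bar>lacunary_term_deriv n z v\<bar>)"
    by (rule suminf_mult[OF summable_terms, symmetric])
  also have "\<dots> \<le> (\<Sum>n. b n)"
    by (rule suminf_le[OF term_le summable_mult[OF summable_terms] summable_b])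
  finally have "cmod (z * of_real (lacunary_V_deriv z v)) \<le> (\<Sum>n. b n)" .
  moreover have "cmod (v * of_real (1 + lacunary_V z)) \<le> cmod v * 3"
    unfolding norm_mult norm_of_real using z by (intro mult_left_mono abs_one_plus_lacunary_V_le) auto
  ultimately show "cmod (lacunary_map_deriv z v) \<le> 3 * cmod v + (\<Sum>n. b n)"
    unfolding lacunary_map_deriv_def
    using norm_triangle_ineq[of "v * of_real (1 + lacunary_V z)" "z * of_real (lacunary_V_deriv z v)"]
    by simp
qed

lemma borel_measurable_lacunary_map_deriv:
  "(\<lambda>z. indicator (ball 0 1) z *\<^sub>R lacunary_map_deriv z v) \<in> borel_measurable borel"
proof -
  define S where "S N z = v * of_real (1 + (\<Sum>i<N. (1 / 2) ^ i * (Re (z ^ lacunary_freq i))\<^sup>2))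
    + z * of_real (\<Sum>i<N. lacunary_term_deriv i z v)" for N z
  show ?thesis
  proof (rule borel_measurable_LIMSEQ_metric[where f="\<lambda>N z. indicator (ball 0 1) z *\<^sub>R S N z"])
    show "(\<lambda>z. indicator (ball 0 1) z *\<^sub>R S N z) \<in> borel_measurable borel" for N
      by (rule borel_measurable_continuous_on_indicator)
         (auto simp: S_def lacunary_term_deriv_def intro!: continuous_intros)
    fix z :: complex
    show "(\<lambda>N. indicator (ball 0 1) z *\<^sub>R S N z) \<longlonglongrightarrow> indicator (ball 0 1) z *\<^sub>R lacunary_map_deriv z v"
    proof (cases "z \<in> ball 0 1")
      case True
      then have z: "cmod z < 1" by simp
      have "(\<lambda>N. \<Sum>i<N. (1 / 2) ^ i * (Re (z ^ lacunary_freq i))\<^sup>2) \<longlonglongrightarrow> lacunary_V z"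
        unfolding lacunary_V_def using summable_LIMSEQ[OF summable_lacunary_V[of z]] z by simp
      moreover have "(\<lambda>N. \<Sum>i<N. lacunary_term_deriv i z v) \<longlonglongrightarrow> lacunary_V_deriv z v"
        unfolding lacunary_V_deriv_def
        by (rule summable_LIMSEQ[OF summable_rabs_cancel[OF summable_lacunary_term_deriv[OF z]]])
      ultimately have "(\<lambda>N. S N z) \<longlonglongrightarrow> lacunary_map_deriv z v"
        unfolding S_def lacunary_map_deriv_def by (intro tendsto_intros)
      then show ?thesis using True by simp
    qed simp
  qed
qed

lemma ennreal_norm_lacunary_map_deriv_le:
  "ennreal (norm (indicator (ball 0 1) z *\<^sub>R lacunary_map_deriv z v))
    \<le> ennreal (3 * cmod v) * indicator (ball 0 1) z
      + (\<Sum>n. ennreal ((1 / 2) ^ n * (2 * cmod v)) * (ennreal (real (lacunary_freq n))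
          * (ennreal (cmod z ^ (2 * lacunary_freq n)) * indicator (ball 0 1) z)))"
proof (cases "z \<in> ball 0 1")
  case True
  then have z: "cmod z < 1" by simp
  define c where "c n = (1 / 2) ^ n * (2 * cmod v) * real (lacunary_freq n)" for n
  have c_nonneg: "c n \<ge> 0" for n by (simp add: c_def)
  have "(\<lambda>n. (1 / 2) ^ n * (2 * real (lacunary_freq n)) * cmod z ^ (2 * lacunary_freq n) * cmod v)
      = (\<lambda>n. c n * cmod z ^ (2 * lacunary_freq n))"
    by (simp add: c_def fun_eq_iff ac_simps)
  note bound = norm_lacunary_map_deriv_le_series[OF z, of v, unfolded this]
  have "ennreal (cmod (lacunary_map_deriv z v)) \<le> ennreal (3 * cmod v + (\<Sum>n. c n * cmod z ^ (2 * lacunary_freq n)))"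
    using bound(2) by (rule ennreal_leI)
  also have "\<dots> = ennreal (3 * cmod v) + (\<Sum>n. ennreal (c n * cmod z ^ (2 * lacunary_freq n)))"
    using bound(1) c_nonneg by (simp add: ennreal_plus suminf_nonneg suminf_ennreal2)
  finally show ?thesis using True c_nonneg by (simp add: c_def ennreal_mult mult.assoc)
qed simp

lemma set_integrable_lacunary_map_deriv: "set_integrable lborel (ball 0 1) (\<lambda>z. lacunary_map_deriv z v)"
  unfolding set_integrable_def
proof (rule integrableI_bounded)
  show "(\<lambda>z. indicator (ball 0 1) z *\<^sub>R lacunary_map_deriv z v) \<in> borel_measurable lborel"
    using borel_measurable_lacunary_map_deriv by simp
  define a where "a n = ennreal ((1 / 2) ^ n * (2 * cmod v))" for n
  define P where "P n = (\<integral>\<^sup>+z. ennreal (cmod z ^ (2 * lacunary_freq n)) * indicator (ball (0::complex) 1) z \<partial>lborel)" for n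
  have [measurable]: "(\<lambda>z. ennreal (cmod z ^ k) * indicator (ball (0::complex) 1) z) \<in> borel_measurable borel" for k
    by measurable
  have "(\<integral>\<^sup>+z. ennreal (norm (indicator (ball 0 1) z *\<^sub>R lacunary_map_deriv z v)) \<partial>lborel)
      \<le> (\<integral>\<^sup>+z. ennreal (3 * cmod v) * indicator (ball 0 1) z
        + (\<Sum>n. a n * (ennreal (real (lacunary_freq n)) * (ennreal (cmod z ^ (2 * lacunary_freq n)) * indicator (ball 0 1) z))) \<partial>lborel)"
    unfolding a_def by (intro nn_integral_mono ennreal_norm_lacunary_map_deriv_le)
  also have "\<dots> = (\<integral>\<^sup>+z. ennreal (3 * cmod v) * indicator (ball (0::complex) 1) z \<partial>lborel)
      + (\<integral>\<^sup>+z. (\<Sum>n. a n * (ennreal (real (lacunary_freq n)) * (ennreal (cmod z ^ (2 * lacunary_freq n)) * indicator (ball 0 1) z))) \<partial>lborel)"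
    by (rule nn_integral_add) auto
  also have "(\<integral>\<^sup>+z. (\<Sum>n. a n * (ennreal (real (lacunary_freq n)) * (ennreal (cmod z ^ (2 * lacunary_freq n)) * indicator (ball 0 1) z))) \<partial>lborel)
      = (\<Sum>n. a n * (ennreal (real (lacunary_freq n)) * P n))"
    by (simp add: nn_integral_suminf nn_integral_cmult P_def)
  also have "(\<Sum>n. a n * (ennreal (real (lacunary_freq n)) * P n)) \<le> (\<Sum>n. ennreal ((1 / 2) ^ n * (4 * pi * cmod v)))"
  proof (intro suminf_le)
    fix n
    have "a n * (ennreal (real (lacunary_freq n)) * P n) \<le> a n * ennreal (2 * pi)"
      unfolding P_def by (intro mult_left_mono nn_integral_norm_power_unit_ball_mult_le) auto
    then show "a n * (ennreal (real (lacunary_freq n)) * P n) \<le> ennreal ((1 / 2) ^ n * (4 * pi * cmod v))"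
      by (simp add: a_def ennreal_mult[symmetric] ac_simps)
  qed auto
  also have "(\<Sum>n. ennreal ((1 / 2) ^ n * (4 * pi * cmod v))) = ennreal (\<Sum>n. (1 / 2) ^ n * (4 * pi * cmod v))"
    by (intro suminf_ennreal2 summable_mult2 summable_half_power) simp
  finally show "(\<integral>\<^sup>+z. ennreal (norm (indicator (ball 0 1) z *\<^sub>R lacunary_map_deriv z v)) \<partial>lborel) < \<infinity>"
    using emeasure_lborel_ball_finite[of "0::complex" 1]
    by (auto simp: nn_integral_cmult_indicator ennreal_mult_less_top order_le_less_trans ennreal_add_less_top)
qed

lemma sobolev_W11_lacunary_map: "sobolev_W11 (ball 0 1) lacunary_map"
  unfolding sobolev_W11_def
proof (intro conjI exI)
  have "set_integrable lborel (cball 0 1) lacunary_map"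
    unfolding set_integrable_def
    by (rule borel_integrable_compact) (auto intro: continuous_on_lacunary_map)
  then show "set_integrable lborel (ball 0 1) lacunary_map"
    by (rule set_integrable_subset) auto
  have bounded: "\<exists>B. \<forall>z\<in>K. cmod (lacunary_map_deriv z v) \<le> B" if K: "compact K" "K \<subseteq> ball 0 1" for K v
  proof -
    obtain r where "r < 1" "K \<subseteq> cball 0 r"
      using compact_subset_ball_imp_subset_cball[OF K] by blast
    then show ?thesis
      using norm_lacunary_map_deriv_le[of _ "max 0 r" v] by (force simp: subset_iff)
  qed
  show "weak_partial (ball 0 1) 1 lacunary_map (\<lambda>z. lacunary_map_deriv z 1)"
    "weak_partial (ball 0 1) \<i> lacunary_map (\<lambda>z. lacunary_map_deriv z \<i>)"
    using has_derivative_lacunary_map bounded by (auto intro!: weak_partial_of_has_derivative)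
  show "set_integrable lborel (ball 0 1) (\<lambda>z. lacunary_map_deriv z 1)"
    "set_integrable lborel (ball 0 1) (\<lambda>z. lacunary_map_deriv z \<i>)"
    by (rule set_integrable_lacunary_map_deriv)+
qed

theorem theorem1p3:
  shows "\<exists>(Y::complex set) (h::complex \<Rightarrow> complex).
     jordan_domain Y \<and>
     (\<exists>k. homeomorphism (cball 0 1) (closure Y) h k) \<and>
     sobolev_W11 (ball 0 1) h \<and>
     (\<integral>\<^sup>+ t \<in> {0..2*pi}. (\<integral>\<^sup>+ s \<in> {0..2*pi}.
         internal_dist Y (h (cis s)) (h (cis t)) / ennreal (cmod (cis s - cis t)) \<partial>lborel) \<partial>lborel)
       = \<infinity>"
  by (intro exI[of _ lacunary_domain] exI[of _ lacunary_map] conjI jordan_domain_lacunary_domain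
      homeomorphism_lacunary_map sobolev_W11_lacunary_map lacunary_boundary_energy_eq_infinity)

end
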